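(* Consider bond percolation with (bond-)interfaces, or site percolation with site-interfaces, on a graph $G\in\mathcal S$. Let $N_n$ be the number of occurring (site-)interfaces $P$ of $o$ with $|P|=n$, and $B_p=\limsup_{n\to\infty}\mathbb E_p(N_n)^{1/n}$. Then $B_p$ is a continuous function of $p\in(0,1)$.
   Context: Interfaces. Let $G$ be an infinite, connected, locally finite, 1-ended, 2-connected graph with a vertex $o$ and a fixed basis $\mathcal P$ of its cycle space over $\mathbb Z_2$. Each edge $vw$ has directions $\vec{vw},\vec{wv}$; for $F\subseteq E(G)$ and subgraph $D$, $\vec F_D=\{\vec{vz}: vz\in F, z\in V(D)\}$. A $\mathcal P$-path connecting $\vec{vw},\vec{yx}$ is a path $Q$ with endvertices $w,y$ (possibly $w=y$) such that the path with edge set $E(Q)\cup\{vw,yx\}$ is a subpath of a cycle in $\mathcal P$; it connects an edge $e$ to a set $J$ if it connects a direction of $e$ to an element of $J$. $J$ is $F$-connected if for every partition into non-empty $J_1,J_2$ some $\mathcal P$-path in $G\setminus F$ connects an element of $J_1$ to one of $J_2$. An interface is a pair $(P,\partial P)$ of edge sets with: (i) $\partial P$ separates $o$ from infinity; (ii) a unique finite component $D$ of $G\setminus\partial P$ contains an endvertex of each edge of $\partial P$; (iii) $\vec{\partial P}_D$ is $\partial P$-connected; (iv) $P$ is the set of $e\in E(D)$ connected to $\vec{\partial P}_D$ by a $\mathcal P$-path in $G\setminus\partial P$. Sizes count edges; it occurs in a bond configuration if all edges of $P$ are occupied and all edges of $\partial P$ vacant. It is a site-interface if no edge of $\partial P$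 has both endvertices in $V(P)$; then $P$ is identified with $V(P)$ and $\partial P$ with the vertices incident with an edge of $\partial P$ but no edge of $P$, sizes count vertices, and it occurs in a site configuration if all vertices of $P$ are occupied and all of $\partial P$ vacant. The class $\mathcal S$ (with fixed $\mathcal P$): (a) quasi-transitive planar lattices (2-connected, locally finite, connected graphs embedded in $\mathbb R^2$ preserved by translations by two linearly independent vectors, with finitely many vertex orbits), $\mathcal P$ = face-boundary cycles; (b) $\mathbb Z^d$, $d\ge2$, $\mathcal P$ = 4-cycles bounding square faces of unit cubes; (c) $\mathbb T^d$, $d\ge2$: $\mathbb Z^d$ plus edges $xy$ with $y_i-x_i=1$ for exactly two coordinates and $y_i=x_i$ otherwise, $\mathcal P$ = resulting triangles. *)

theory Defs
  imports "HOL-Probability.Probability"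
begin

definition graph :: "'v set \<Rightarrow> 'v set set \<Rightarrow> bool" where
  "graph V E \<longleftrightarrow> (\<forall>e\<in>E. \<exists>u v. u \<noteq> v \<and> u \<in> V \<and> v \<in> V \<and> e = {u, v})"

definition walk_edges :: "'v list \<Rightarrow> 'v set set" where
  "walk_edges xs = set (map (\<lambda>(a, b). {a, b}) (zip xs (tl xs)))"

definition is_path :: "'v set \<Rightarrow> 'v set set \<Rightarrow> 'v list \<Rightarrow> bool" where
  "is_path V E xs \<longleftrightarrow> xs \<noteq> [] \<and> distinct xs \<and> set xs \<subseteq> V \<and> walk_edges xs \<subseteq> E"

definition comp :: "'v set \<Rightarrow> 'v set set \<Rightarrow> 'v \<Rightarrow>  'v set" where
  "comp V E x = {y. \<exists>xs. is_path V E xs \<and> hd xs = x \<and> last xs = y}"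

definition comps :: "'v set \<Rightarrow> 'v set set \<Rightarrow> 'v set set" where
  "comps V E = comp V E ` V"

definition connected_graph :: "'v set \<Rightarrow> 'v set set \<Rightarrow> bool" where
  "connected_graph V E \<longleftrightarrow> V \<noteq> {} \<and> (\<forall>x\<in>V. comp V E x = V)"

definition locally_finite :: "'v set \<Rightarrow> 'v set set \<Rightarrow> bool" where
  "locally_finite V E \<longleftrightarrow> (\<forall>v\<in>V. finite {e\<in>E. v \<in> e})"

definition two_connected :: "'v set \<Rightarrow> 'v set set \<Rightarrow> bool" where
  "two_connected V E \<longleftrightarrow> (\<exists>a b c. a \<in> V \<and> b \<in> V \<and> c \<in> V \<and> distinct [a, b, c]) \<and>
     connected_graph V E \<and> (\<forall>v\<in>V. connected_graph (V - {v}) {e\<in>E. v \<notin> e})"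

definition is_cycle :: "'v set set \<Rightarrow> 'v set set \<Rightarrow> bool" where
  "is_cycle E C \<longleftrightarrow> (\<exists>xs. length xs \<ge> 3 \<and> distinct xs \<and> C = walk_edges (xs @ [hd xs]) \<and> C \<subseteq> E)"

text \<open>A direction of an edge {v,w} is the pair (v,w), read as "from v into w".\<close>
definition Ppath :: "'v set \<Rightarrow> 'v set set \<Rightarrow> 'v set set set \<Rightarrow> 'v set set \<Rightarrow>
    'v \<times> 'v \<Rightarrow> 'v \<times> 'v \<Rightarrow> 'v list \<Rightarrow> bool" where
  "Ppath V E Pc F d1 d2 Q \<longleftrightarrow>
     is_path V (E - F) Q \<and> hd Q = snd d1 \<and> last Q = snd d2 \<and>
     {fst d1, snd d1} \<in> E \<and> {fst d2, snd d2} \<in> E \<and>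
     is_path V E (fst d1 # Q @ [fst d2]) \<and>
     (\<exists>C\<in>Pc. walk_edges (fst d1 # Q @ [fst d2]) \<subseteq> C)"

definition dirs :: "'v set set \<Rightarrow> 'v set \<Rightarrow> ('v \<times> 'v) set" where
  "dirs F D = {(v, z). {v, z} \<in> F \<and> z \<in> D}"

definition F_connected :: "'v set \<Rightarrow> 'v set set \<Rightarrow> 'v set set set \<Rightarrow> 'v set set \<Rightarrow>
    ('v \<times> 'v) set \<Rightarrow> bool" where
  "F_connected V E Pc F J \<longleftrightarrow>
     (\<forall>J1 J2. J1 \<noteq> {} \<and> J2 \<noteq> {} \<and> J1 \<inter> J2 = {} \<and> J1 \<union> J2 = J \<longrightarrow>
        (\<exists>d1\<in>J1. \<exists>d2\<in>J2. \<exists>Q. Ppath V E Pc F d1 d2 Q))"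

definition connects_edge :: "'v set \<Rightarrow> 'v set set \<Rightarrow> 'v set set set \<Rightarrow> 'v set set \<Rightarrow>
    'v set \<Rightarrow> ('v \<times> 'v) set \<Rightarrow> bool" where
  "connects_edge V E Pc F e J \<longleftrightarrow>
     (\<exists>a b. e = {a, b} \<and> (\<exists>d\<in>{(a, b), (b, a)}. \<exists>j\<in>J. \<exists>Q. Ppath V E Pc F d j Q))"

definition interface :: "'v set \<Rightarrow> 'v set set \<Rightarrow> 'v set set set \<Rightarrow> 'v \<Rightarrow> 
    'v set set \<Rightarrow> 'v set set \<Rightarrow> bool" where
  "interface V E Pc x0 P dP \<longleftrightarrow>
     dP \<subseteq> E \<and>
     finite (comp V (E - dP) x0) \<and>
     (\<exists>D. D \<in> comps V (E - dP) \<and> finite D \<and> (\<forall>e\<in>dP. e \<inter> D \<noteq> {}) \<and>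
          (\<forall>D'. D' \<in> comps V (E - dP) \<and> finite D' \<and> (\<forall>e\<in>dP. e \<inter> D' \<noteq> {}) \<longrightarrow> D' = D) \<and>
          F_connected V E Pc dP (dirs dP D) \<and>
          P = {e \<in> E - dP. e \<subseteq> D \<and> connects_edge V E Pc dP e (dirs dP D)})"

definition site_interface :: "'v set \<Rightarrow> 'v set set \<Rightarrow> 'v set set set \<Rightarrow> 'v \<Rightarrow> 
    'v set set \<Rightarrow> 'v set set \<Rightarrow> bool" where
  "site_interface V E Pc x0 P dP \<longleftrightarrow>
     interface V E Pc x0 P dP \<and> (\<forall>e\<in>dP. \<not> e \<subseteq> \<Union>P)"

definition bond_measure :: "'v set set \<Rightarrow> real \<Rightarrow> ('v set \<Rightarrow> bool) measure" where
  "bond_measure E p = PiM E (\<lambda>_. measure_pmf (bernoulli_pmf p))"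

definition site_measure :: "'v set \<Rightarrow> real \<Rightarrow> ('v \<Rightarrow> bool) measure" where
  "site_measure V p = PiM V (\<lambda>_. measure_pmf (bernoulli_pmf p))"

definition ecard :: "'a set \<Rightarrow> ennreal" where
  "ecard S = emeasure (count_space UNIV) S"

definition N_bond :: "'v set \<Rightarrow> 'v set set \<Rightarrow> 'v set set set \<Rightarrow> 'v \<Rightarrow>  nat \<Rightarrow>
    ('v set \<Rightarrow> bool) \<Rightarrow> ennreal" where
  "N_bond V E Pc x0 n \<omega> = ecard {(P, dP). interface V E Pc x0 P dP \<and> card P = n \<and>
       (\<forall>e\<in>P. \<omega> e) \<and> (\<forall>e\<in>dP. \<not> \<omega> e)}"

text \<open>Site-interfaces, identified with the pair of vertex sets (V(P), vertices of dP-edges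
  not incident with any edge of P).\<close>
definition N_site :: "'v set \<Rightarrow> 'v set set \<Rightarrow> 'v set set set \<Rightarrow> 'v \<Rightarrow>  nat \<Rightarrow>
    ('v \<Rightarrow> bool) \<Rightarrow> ennreal" where
  "N_site V E Pc x0 n \<omega> = ecard {(\<Union>P, \<Union>dP - \<Union>P) | P dP. site_interface V E Pc x0 P dP \<and>
       card (\<Union>P) = n \<and> (\<forall>v\<in>\<Union>P. \<omega> v) \<and> (\<forall>v\<in>\<Union>dP - \<Union>P. \<not> \<omega> v)}"

definition EN_bond :: "'v set \<Rightarrow> 'v set set \<Rightarrow> 'v set set set \<Rightarrow> 'v \<Rightarrow>  real \<Rightarrow> nat \<Rightarrow> ennreal" where
  "EN_bond V E Pc x0 p n = (\<integral>\<^sup>+ \<omega>. N_bond V E Pc x0 n \<omega> \<partial>bond_measure E p)"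

definition EN_site :: "'v set \<Rightarrow> 'v set set \<Rightarrow> 'v set set set \<Rightarrow> 'v \<Rightarrow>  real \<Rightarrow> nat \<Rightarrow> ennreal" where
  "EN_site V E Pc x0 p n = (\<integral>\<^sup>+ \<omega>. N_site V E Pc x0 n \<omega> \<partial>site_measure V p)"

definition eroot :: "nat \<Rightarrow> ennreal \<Rightarrow> ereal" where
  "eroot n x = (if x = \<top> then \<infinity> else ereal (root n (enn2real x)))"

definition B_bond :: "'v set \<Rightarrow> 'v set set \<Rightarrow> 'v set set set \<Rightarrow> 'v \<Rightarrow>  real \<Rightarrow> ereal" where
  "B_bond V E Pc x0 p = limsup (\<lambda>n. eroot n (EN_bond V E Pc x0 p n))"

definition B_site :: "'v set \<Rightarrow> 'v set set \<Rightarrow> 'v set set set \<Rightarrow> 'v \<Rightarrow>  real \<Rightarrow> ereal" where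
  "B_site V E Pc x0 p = limsup (\<lambda>n. eroot n (EN_site V E Pc x0 p n))"

definition continuous_on_01 :: "(real \<Rightarrow> ereal) \<Rightarrow> bool" where
  "continuous_on_01 B \<longleftrightarrow> (\<exists>f :: real \<Rightarrow> real. continuous_on {0<..<1} f \<and>
      (\<forall>p\<in>{0<..<1}. B p = ereal (f p)))"

subsection \<open>(a) quasi-transitive planar lattices, vertices placed in the plane (= complex numbers)\<close>

definition translate :: "complex \<Rightarrow> complex \<Rightarrow> complex" where
  "translate t z = z + t"

definition planar_lattice :: "complex set \<Rightarrow> complex set set \<Rightarrow> complex set set set \<Rightarrow> bool" where
  "planar_lattice V E Pc \<longleftrightarrow>
     graph V E \<and> connected_graph V E \<and> locally_finite V E \<and> two_connected V E \<and>
     (\<exists>\<gamma> :: complex set \<Rightarrow> real \<Rightarrow> complex.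
        \<comment> \<open>embedding: edges drawn as arcs between their endvertices, meeting only at common endvertices\<close>
        (\<forall>e\<in>E. arc (\<gamma> e) \<and> e = {pathstart (\<gamma> e), pathfinish (\<gamma> e)} \<and> path_image (\<gamma> e) \<inter> V = e) \<and>
        (\<forall>e\<in>E. \<forall>e'\<in>E. e \<noteq> e' \<longrightarrow> path_image (\<gamma> e) \<inter> path_image (\<gamma> e') \<subseteq> e \<inter> e') \<and>
        \<comment> \<open>preserved by translations by two linearly independent vectors, finitely many vertex orbits\<close>
        (\<exists>a b. independent {a, b} \<and> a \<noteq> b \<and>
           (\<forall>t\<in>{a, b}. translate t ` V = V \<and> (\<lambda>e. translate t ` e) ` E = E \<and>
               (\<forall>e\<in>E. path_image (\<gamma> (translate t ` e)) = translate t ` path_image (\<gamma> e))) \<and>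
           (\<exists>S. finite S \<and> S \<subseteq> V \<and>
              (\<forall>v\<in>V. \<exists>u\<in>S. \<exists>m n :: int. v = u + of_int m * a + of_int n * b))) \<and>
        \<comment> \<open>Pc = the face-boundary cycles\<close>
        Pc = {C. is_cycle E C \<and>
               (\<exists>F\<in>components (- (V \<union> (\<Union>e\<in>E. path_image (\<gamma> e)))).
                   frontier F = (\<Union>e\<in>C. path_image (\<gamma> e)))})"

definition Zd_V :: "nat \<Rightarrow> (nat \<Rightarrow> int) set" where
  "Zd_V d = {x. \<forall>i\<ge>d. x i = 0}"

definition unitv :: "nat \<Rightarrow> nat \<Rightarrow> int" where
  "unitv i = (\<lambda>k. if k = i then 1 else 0)"

definition addv :: "(nat \<Rightarrow> int) \<Rightarrow> (nat \<Rightarrow> int) \<Rightarrow> nat \<Rightarrow> int" where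
  "addv x y = (\<lambda>k. x k + y k)"

definition Zd_E :: "nat \<Rightarrow> (nat \<Rightarrow> int) set set" where
  "Zd_E d = {{x, addv x (unitv i)} | x i. x \<in> Zd_V d \<and> i < d}"

text \<open>4-cycles bounding the square faces of unit cubes.\<close>
definition Zd_P :: "nat \<Rightarrow> (nat \<Rightarrow> int) set set set" where
  "Zd_P d = {{{x, addv x (unitv i)}, {addv x (unitv i), addv (addv x (unitv i)) (unitv j)},
              {addv x (unitv j), addv (addv x (unitv i)) (unitv j)}, {x, addv x (unitv j)}}
             | x i j. x \<in> Zd_V d \<and> i < j \<and> j < d}"

definition Td_E :: "nat \<Rightarrow> (nat \<Rightarrow> int) set set" where
  "Td_E d = Zd_E d \<union> {{x, addv (addv x (unitv i)) (unitv j)} | x i j. x \<in> Zd_V d \<and> i < j \<and> j < d}"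

definition Td_P :: "nat \<Rightarrow> (nat \<Rightarrow> int) set set set" where
  "Td_P d = {C. \<exists>a b c. distinct [a, b, c] \<and> {a, b} \<in> Td_E d \<and> {b, c} \<in> Td_E d \<and>
                 {a, c} \<in> Td_E d \<and> C = {{a, b}, {b, c}, {a, c}}}"

end

theory Submission
  imports Defs
begin

text \<open>
  The expected number of occurring interfaces of size \<open>n\<close> is the sum of \<open>p\<^sup>n (1 - p)\<^bsup>|\<partial>P|\<^esup>\<close>
  over the interfaces \<open>(P, \<partial>P)\<close> of size \<open>n\<close>. In a graph of bounded degree \<open>|\<partial>P|\<close> is at most
  linear in \<open>|P|\<close>, so replacing \<open>p\<close> by \<open>q\<close> changes every term by at most \<open>L(p, q)\<^sup>n\<close> with
  \<open>L(p, q) \<rightarrow> 1\<close> as \<open>q \<rightarrow> p\<close>, and the growth rates \<open>B\<^sub>p\<close>, \<open>B\<^sub>q\<close> differ at most by the factor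
  \<open>L(p, q)\<close>. It remains to see that \<open>B\<^sub>p\<close> is finite, i.e. that there are only exponentially many
  interfaces of size \<open>n\<close>. This holds because \<open>P \<union> \<partial>P\<close> is edge-connected and \<open>\<partial>P\<close> comes within
  distance \<open>O(|\<partial>P|)\<close> of \<open>o\<close>: in each lattice of the class there is a family of rays, reachable
  from \<open>o\<close> in linear length and using each edge boundedly often, and all of them must cross \<open>\<partial>P\<close>
  because \<open>o\<close> lies in a finite component of \<open>G - \<partial>P\<close>.
\<close>

lemma walk_edges_Nil [simp]: "walk_edges [] = {}"
  by (simp add: walk_edges_def)

lemma walk_edges_singleton [simp]: "walk_edges [x] = {}"
  by (simp add: walk_edges_def)

lemma walk_edges_Cons_Cons [simp]: "walk_edges (x # y # xs) = insert {x, y} (walk_edges (y # xs))"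
  by (simp add: walk_edges_def)

lemma walk_edges_append: "walk_edges (xs @ y # ys) = walk_edges (xs @ [y]) \<union> walk_edges (y # ys)"
  by (induction xs rule: induct_list012) auto

lemma walk_edges_snoc:
  "walk_edges (xs @ [y]) = (if xs = [] then {} else insert {last xs, y} (walk_edges xs))"
  by (induction xs rule: induct_list012) auto

lemma walk_edges_prefix: "walk_edges xs \<subseteq> walk_edges (xs @ ys)"
  by (induction xs rule: induct_list012) auto

lemma walk_edges_suffix: "walk_edges ys \<subseteq> walk_edges (xs @ ys)"
proof (induction xs)
  case (Cons x xs)
  then show ?case by (cases "xs @ ys") auto
qed simp

lemma walk_edges_rev [simp]: "walk_edges (rev xs) = walk_edges xs"
proof (induction xs)
  case (Cons x xs)
  have "walk_edges (rev (x # xs)) = (if xs = [] then {} else insert {hd xs, x} (walk_edges xs))"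
    using Cons.IH walk_edges_snoc[of "rev xs" x] by (simp add: last_rev)
  also have "\<dots> = walk_edges (x # xs)" by (cases xs) (auto simp: insert_commute)
  finally show ?case .
qed simp

lemma walk_edges_map: "walk_edges (map f xs) = (\<lambda>e. f ` e) ` walk_edges xs"
  by (induction xs rule: induct_list012) auto

lemma walk_edge_subset: "e \<in> walk_edges xs \<Longrightarrow> e \<subseteq> set xs"
  by (induction xs rule: induct_list012) auto

lemma walk_edgesE:
  assumes "e \<in> walk_edges xs"
  obtains as a b bs where "xs = as @ a # b # bs" "e = {a, b}"
proof -
  have "\<exists>as a b bs. xs = as @ a # b # bs \<and> e = {a, b}"
    using assms
  proof (induction xs rule: induct_list012)
    case (3 x y zs)
    show ?case
    proof (cases "e = {x, y}")
      case True
      then show ?thesis by (metis append_Nil)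
    next
      case False
      then obtain as a b bs where "y # zs = as @ a # b # bs" "e = {a, b}"
        using "3.IH"(2) "3.prems" by auto
      then show ?thesis by (metis append_Cons)
    qed
  qed auto
  then show ?thesis using that by blast
qed

lemma is_path_suffix: "is_path V E (xs @ ys) \<Longrightarrow> ys \<noteq> [] \<Longrightarrow> is_path V E ys"
  using walk_edges_suffix[of ys xs] by (auto simp: is_path_def)

definition walk :: "'v set \<Rightarrow> 'v set set \<Rightarrow> 'v list \<Rightarrow> bool" where
  "walk V E xs \<longleftrightarrow> xs \<noteq> [] \<and> set xs \<subseteq> V \<and> walk_edges xs \<subseteq> E"

lemma walk_singleton [simp]: "walk V E [x] \<longleftrightarrow> x \<in> V"
  by (simp add: walk_def)

lemma walk_hd_in: "walk V E xs \<Longrightarrow> hd xs \<in> V"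
  by (auto simp: walk_def)

lemma walk_last_in: "walk V E xs \<Longrightarrow> last xs \<in> V"
  by (auto simp: walk_def)

lemma walk_mono: "walk V E xs \<Longrightarrow> E \<subseteq> E' \<Longrightarrow> walk V E' xs"
  by (auto simp: walk_def)

lemma walk_rev: "walk V E xs \<Longrightarrow> walk V E (rev xs)"
  by (auto simp: walk_def)

lemma walk_prefix: "walk V E (xs @ ys) \<Longrightarrow> xs \<noteq> [] \<Longrightarrow> walk V E xs"
  using walk_edges_prefix[of xs ys] by (auto simp: walk_def)

lemma walk_append:
  assumes "walk V E xs" "walk V E ys" "last xs = hd ys"
  shows "walk V E (xs @ tl ys)" "hd (xs @ tl ys) = hd xs" "last (xs @ tl ys) = last ys"
proof -
  obtain y ys' where ys: "ys = y # ys'" using assms(2) by (cases ys) (auto simp: walk_def)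
  have "xs \<noteq> []" using assms(1) by (simp add: walk_def)
  then have xs: "xs = butlast xs @ [y]" using assms(3) ys by (metis append_butlast_last_id list.sel(1))
  have "walk_edges (xs @ tl ys) = walk_edges xs \<union> walk_edges ys"
    using walk_edges_append[of "butlast xs" y ys'] xs ys by (metis append.assoc append_Cons append_Nil list.sel(3))
  then show "walk V E (xs @ tl ys)" using assms(1,2) ys by (auto simp: walk_def)
  show "hd (xs @ tl ys) = hd xs" using \<open>xs \<noteq> []\<close> by simp
  show "last (xs @ tl ys) = last ys" using assms(3) ys by (cases ys') simp_all
qed

lemma path_imp_walk: "is_path V E xs \<Longrightarrow> walk V E xs"
  by (simp add: is_path_def walk_def)

lemma walk_imp_path:
  "walk V E xs \<Longrightarrow> \<exists>ys. is_path V E ys \<and> hd ys = hd xs \<and> last ys = last xs"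
proof (induction xs rule: length_induct)
  case (1 xs)
  show ?case
  proof (cases "distinct xs")
    case True
    then show ?thesis using "1.prems" by (auto simp: walk_def is_path_def)
  next
    case False
    then obtain as y bs cs where xs: "xs = as @ [y] @ bs @ [y] @ cs"
      using not_distinct_decomp by blast
    let ?ys = "as @ [y] @ cs"
    have "walk_edges ?ys \<subseteq> walk_edges xs"
      using walk_edges_append[of as y cs] walk_edges_prefix[of "as @ [y]" "bs @ [y] @ cs"]
        walk_edges_suffix[of "y # cs" "as @ [y] @ bs"] by (auto simp: xs)
    moreover have "set ?ys \<subseteq> set xs" by (auto simp: xs)
    ultimately have "walk V E ?ys" using "1.prems" by (auto simp: walk_def)
    moreover have "length ?ys < length xs" by (simp add: xs)
    ultimately obtain zs where "is_path V E zs" "hd zs = hd ?ys" "last zs = last ?ys"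
      using "1.IH" by blast
    moreover have "hd ?ys = hd xs" by (cases as) (simp_all add: xs)
    moreover have "last ?ys = last xs" by (cases cs) (simp_all add: xs)
    ultimately show ?thesis by auto
  qed
qed

lemma comp_iff_walk: "y \<in> comp V E x \<longleftrightarrow> (\<exists>xs. walk V E xs \<and> hd xs = x \<and> last xs = y)"
proof
  show "y \<in> comp V E x \<Longrightarrow> \<exists>xs. walk V E xs \<and> hd xs = x \<and> last xs = y"
    unfolding comp_def using path_imp_walk by blast
  show "\<exists>xs. walk V E xs \<and> hd xs = x \<and> last xs = y \<Longrightarrow> y \<in> comp V E x"
    unfolding comp_def using walk_imp_path by fastforce
qed

lemma comp_subset: "comp V E x \<subseteq> V"
  using walk_last_in by (fastforce simp: comp_iff_walk)

lemma comp_trans: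
  assumes "y \<in> comp V E x" "z \<in> comp V E y"
  shows "z \<in> comp V E x"
proof -
  obtain xs ys where "walk V E xs" "hd xs = x" "last xs = y" "walk V E ys" "hd ys = y" "last ys = z"
    using assms unfolding comp_iff_walk by blast
  then show ?thesis unfolding comp_iff_walk using walk_append[of V E xs ys] by auto
qed

lemma comp_sym:
  assumes "y \<in> comp V E x"
  shows "x \<in> comp V E y"
proof -
  obtain xs where "walk V E xs" "hd xs = x" "last xs = y"
    using assms unfolding comp_iff_walk by blast
  then show ?thesis unfolding comp_iff_walk using walk_rev by (fastforce simp: hd_rev last_rev)
qed

lemma comp_eq: "y \<in> comp V E x \<Longrightarrow> comp V E y = comp V E x"
  by (intro set_eqI iffI) (metis comp_trans, metis comp_sym comp_trans)

lemma walk_subset_comp: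
  assumes "walk V E xs" "hd xs \<in> comp V E x"
  shows "set xs \<subseteq> comp V E x"
proof
  fix z assume "z \<in> set xs"
  then obtain as bs where xs: "xs = (as @ [z]) @ bs" by (metis append.assoc append_Cons append_Nil split_list)
  then have "walk V E (as @ [z])" "hd (as @ [z]) = hd xs"
    using walk_prefix[of V E "as @ [z]" bs] assms(1) by (auto simp: hd_append)
  then have "z \<in> comp V E (hd xs)" unfolding comp_iff_walk by force
  with assms(2) show "z \<in> comp V E x" by (rule comp_trans)
qed

lemma comps_eq_comp: "D \<in> comps V E \<Longrightarrow> z \<in> D \<Longrightarrow> D = comp V E z"
  unfolding comps_def by (metis comp_eq imageE)

lemma comps_subset: "D \<in> comps V E \<Longrightarrow> D \<subseteq> V"
  unfolding comps_def by (metis comp_subset imageE)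

lemma graph_edgeE:
  assumes "graph V E" "e \<in> E" "z \<in> e"
  obtains v where "e = {v, z}" "v \<noteq> z" "v \<in> V" "z \<in> V"
proof -
  obtain u w where "u \<noteq> w" "u \<in> V" "w \<in> V" "e = {u, w}"
    using assms(1,2) unfolding graph_def by blast
  then show ?thesis
  proof (cases "z = u")
    case True
    then show ?thesis using that[of w] \<open>u \<noteq> w\<close> \<open>u \<in> V\<close> \<open>w \<in> V\<close> \<open>e = {u, w}\<close>
      by (simp add: insert_commute)
  next
    case False
    then show ?thesis using that[of u] assms(3) \<open>u \<noteq> w\<close> \<open>u \<in> V\<close> \<open>w \<in> V\<close> \<open>e = {u, w}\<close>
      by auto
  qed
qed

lemma graph_edge_card: "graph V E \<Longrightarrow> e \<in> E \<Longrightarrow> finite e \<and> card e = 2"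
  unfolding graph_def by auto

definition degree_bounded :: "'v set \<Rightarrow> 'v set set \<Rightarrow> nat \<Rightarrow> bool" where
  "degree_bounded V E \<Delta> \<longleftrightarrow> (\<forall>v\<in>V. finite {e\<in>E. v \<in> e} \<and> card {e\<in>E. v \<in> e} \<le> \<Delta>)"

lemma degree_boundedD:
  "degree_bounded V E \<Delta> \<Longrightarrow> v \<in> V \<Longrightarrow> finite {e\<in>E. v \<in> e} \<and> card {e\<in>E. v \<in> e} \<le> \<Delta>"
  unfolding degree_bounded_def by blast

lemma card_edges_at_le:
  assumes "degree_bounded V E \<Delta>" "X \<subseteq> V" "finite X"
  shows "finite (\<Union>v\<in>X. {e\<in>E. v \<in> e}) \<and> card (\<Union>v\<in>X. {e\<in>E. v \<in> e}) \<le> \<Delta> * card X"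
proof -
  have fin: "\<forall>v\<in>X. finite {e\<in>E. v \<in> e}" and le: "\<forall>v\<in>X. card {e\<in>E. v \<in> e} \<le> \<Delta>"
    using assms(1,2) unfolding degree_bounded_def by auto
  have "card (\<Union>v\<in>X. {e\<in>E. v \<in> e}) \<le> (\<Sum>v\<in>X. card {e\<in>E. v \<in> e})"
    by (rule card_UN_le[OF assms(3)])
  also have "\<dots> \<le> (\<Sum>v\<in>X. \<Delta>)" by (rule sum_mono) (use le in blast)
  also have "\<dots> = \<Delta> * card X" by simp
  finally show ?thesis using fin assms(3) by simp
qed

section \<open>Structure of interfaces\<close>

lemma interfaceE:
  assumes "interface V E Pc x0 P dP"
  obtains D where "D \<in> comps V (E - dP)" "finite D" "\<forall>e\<in>dP. e \<inter> D \<noteq> {}"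
    "F_connected V E Pc dP (dirs dP D)"
    "P = {e \<in> E - dP. e \<subseteq> D \<and> connects_edge V E Pc dP e (dirs dP D)}"
    "dP \<subseteq> E" "finite (comp V (E - dP) x0)"
    "\<forall>D'. D' \<in> comps V (E - dP) \<and> finite D' \<and> (\<forall>e\<in>dP. e \<inter> D' \<noteq> {}) \<longrightarrow> D' = D"
  using assms unfolding interface_def by (elim conjE exE) (rule that)

lemma interface_unique:
  assumes "interface V E Pc x0 P dP" "interface V E Pc x0 P' dP"
  shows "P = P'"
proof -
  obtain D where D: "D \<in> comps V (E - dP)" "finite D" "\<forall>e\<in>dP. e \<inter> D \<noteq> {}"
    "P = {e \<in> E - dP. e \<subseteq> D \<and> connects_edge V E Pc dP e (dirs dP D)}"
    "\<forall>D'. D' \<in> comps V (E - dP) \<and> finite D' \<and> (\<forall>e\<in>dP. e \<inter> D' \<noteq> {}) \<longrightarrow> D' = D"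
    using assms(1) by (elim interfaceE) (rule that)
  obtain D' where D': "D' \<in> comps V (E - dP)" "finite D'" "\<forall>e\<in>dP. e \<inter> D' \<noteq> {}"
    "P' = {e \<in> E - dP. e \<subseteq> D' \<and> connects_edge V E Pc dP e (dirs dP D')}"
    using assms(2) by (elim interfaceE) (rule that)
  have "D' = D" using D(5) D'(1-3) by blast
  then show ?thesis using D(4) D'(4) by simp
qed

lemma interface_subset:
  assumes "interface V E Pc x0 P dP"
  shows "P \<subseteq> E \<and> dP \<subseteq> E \<and> P \<inter> dP = {}"
proof -
  obtain D where "P = {e \<in> E - dP. e \<subseteq> D \<and> connects_edge V E Pc dP e (dirs dP D)}" "dP \<subseteq> E"
    using assms by (elim interfaceE) (rule that)
  then show ?thesis by auto
qed

lemma F_connectedE: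
  assumes "F_connected V E Pc F J" "J1 \<noteq> {}" "J2 \<noteq> {}" "J1 \<inter> J2 = {}" "J1 \<union> J2 = J"
  obtains d1 d2 Q where "d1 \<in> J1" "d2 \<in> J2" "Ppath V E Pc F d1 d2 Q"
  using assms(1)[unfolded F_connected_def, rule_format, of J1 J2] assms(2-5) that by blast

lemma dirs_edge: "j \<in> dirs dP D \<Longrightarrow> {fst j, snd j} \<in> dP \<and> snd j \<in> D"
  unfolding dirs_def by auto

lemma dirs_memI:
  assumes "graph V E" "dP \<subseteq> E" "e \<in> dP" "z \<in> e" "z \<in> D"
  shows "\<exists>v. e = {v, z} \<and> (v, z) \<in> dirs dP D"
proof -
  obtain v where "e = {v, z}" using graph_edgeE[OF assms(1) _ assms(4)] assms(2,3) by blast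
  then show ?thesis using assms(3,5) by (auto simp: dirs_def)
qed

lemma PpathD:
  assumes "Ppath V E Pc F d j Q"
  shows "is_path V (E - F) Q" "hd Q = snd d" "last Q = snd j"
  using assms by (simp_all add: Ppath_def)

text \<open>Each edge of \<open>Q\<close> is connected to \<open>\<partial>P\<close> by the remainder of \<open>Q\<close>.\<close>
lemma Ppath_edges_in_interface:
  assumes D: "D \<in> comps V (E - dP)"
    and P: "P = {e \<in> E - dP. e \<subseteq> D \<and> connects_edge V E Pc dP e (dirs dP D)}"
    and pp: "Ppath V E Pc dP d j Q" and j: "j \<in> dirs dP D" and dD: "snd d \<in> D"
  shows "walk_edges Q \<subseteq> P"
proof
  fix e assume e: "e \<in> walk_edges Q"
  then obtain as a b bs where Q: "Q = as @ a # b # bs" and eab: "e = {a, b}" by (rule walk_edgesE)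
  have pQ: "is_path V (E - dP) Q" and hQ: "hd Q = snd d" and lQ: "last Q = snd j"
    and ej: "{fst j, snd j} \<in> E" and pL: "is_path V E (fst d # Q @ [fst j])"
    using pp unfolding Ppath_def by auto
  obtain C where C: "C \<in> Pc" "walk_edges (fst d # Q @ [fst j]) \<subseteq> C"
    using pp unfolding Ppath_def by auto
  have eE: "e \<in> E - dP" using pQ e unfolding is_path_def by auto
  have "set Q \<subseteq> D"
    using walk_subset_comp[OF path_imp_walk[OF pQ]] comps_eq_comp[OF D dD] hQ dD by simp
  then have eD: "e \<subseteq> D" using walk_edge_subset[OF e] by (rule subset_trans[rotated])
  have L: "fst d # Q @ [fst j] = (fst d # as) @ (a # b # bs @ [fst j])" using Q by simp
  have "walk_edges (a # b # bs @ [fst j]) \<subseteq> C"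
    using C(2) walk_edges_suffix[of "a # b # bs @ [fst j]" "fst d # as"] unfolding L by (rule order_trans[rotated])
  moreover have "is_path V (E - dP) (b # bs)"
    using is_path_suffix[of V "E - dP" "as @ [a]" "b # bs"] pQ Q by simp
  moreover have "is_path V E (a # b # bs @ [fst j])"
    using is_path_suffix[of V E "fst d # as" "a # b # bs @ [fst j]"] pL L by simp
  moreover have "last (b # bs) = snd j" using lQ Q by simp
  moreover have "{a, b} \<in> E" using eE eab by simp
  ultimately have "Ppath V E Pc dP (a, b) j (b # bs)"
    unfolding Ppath_def using C(1) ej by auto
  then have "connects_edge V E Pc dP e (dirs dP D)"
    unfolding connects_edge_def eab using j by blast
  then show "e \<in> P" unfolding P using eE eD by simp
qed

text \<open>Separating the directions entering \<open>z\<close> from the others, \<open>\<partial>P\<close>-connectedness yields a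
  \<open>\<P>\<close>-path that leaves \<open>z\<close>; its first edge is in \<open>P\<close>.\<close>
lemma interface_boundary_vertex_in_P:
  assumes G: "graph V E"
    and D: "D \<in> comps V (E - dP)" "F_connected V E Pc dP (dirs dP D)"
      "P = {e \<in> E - dP. e \<subseteq> D \<and> connects_edge V E Pc dP e (dirs dP D)}" "dP \<subseteq> E"
    and z: "z \<in> D \<inter> \<Union>dP" and z': "z' \<in> D \<inter> \<Union>dP" "z' \<noteq> z"
  shows "z \<in> \<Union>P"
proof -
  obtain e e' where e: "e \<in> dP" "z \<in> e" and e': "e' \<in> dP" "z' \<in> e'" using z z' by blast
  obtain v where d1: "(v, z) \<in> dirs dP D" using dirs_memI[OF G D(4) e] z by blast
  obtain v' where d2: "(v', z') \<in> dirs dP D" using dirs_memI[OF G D(4) e'] z' by blast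
  let ?J1 = "{d \<in> dirs dP D. snd d = z}" and ?J2 = "{d \<in> dirs dP D. snd d \<noteq> z}"
  have "?J1 \<noteq> {}" "?J2 \<noteq> {}" "?J1 \<inter> ?J2 = {}" "?J1 \<union> ?J2 = dirs dP D"
    using d1 d2 z'(2) by auto
  then obtain d j Q where dj: "d \<in> ?J1" "j \<in> ?J2" and pp: "Ppath V E Pc dP d j Q"
    by (rule F_connectedE[OF D(2)])
  have WQ: "walk_edges Q \<subseteq> P" using Ppath_edges_in_interface[OF D(1,3) pp] dj dirs_edge by blast
  have "hd Q = z" "last Q \<noteq> z" "Q \<noteq> []" using pp dj unfolding Ppath_def is_path_def by auto
  then obtain q rest where "Q = z # q # rest"
    by (cases Q; cases "tl Q") auto
  then have "{z, q} \<in> P" using WQ by simp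
  then show ?thesis by blast
qed

lemma interface_finite_boundary_le:
  assumes G: "graph V E" and deg: "degree_bounded V E \<Delta>" and I: "interface V E Pc x0 P dP"
  shows "finite P \<and> finite dP \<and> card dP \<le> \<Delta> * (2 * card P + 1)"
proof -
  obtain D where D: "D \<in> comps V (E - dP)" "finite D" "\<forall>e\<in>dP. e \<inter> D \<noteq> {}"
    "F_connected V E Pc dP (dirs dP D)"
    "P = {e \<in> E - dP. e \<subseteq> D \<and> connects_edge V E Pc dP e (dirs dP D)}" "dP \<subseteq> E"
    using I by (rule interfaceE)
  define Z where "Z = D \<inter> \<Union>dP"
  have finP: "finite P" using D(2,5) by (auto intro: finite_subset[of P "Pow D"])
  have ZV: "Z \<subseteq> V" "finite Z" using comps_subset[OF D(1)] D(2) by (auto simp: Z_def)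
  have sub: "dP \<subseteq> (\<Union>z\<in>Z. {e\<in>E. z \<in> e})"
  proof
    fix e assume e: "e \<in> dP"
    then obtain z where "z \<in> e" "z \<in> D" using D(3) by blast
    then show "e \<in> (\<Union>z\<in>Z. {e\<in>E. z \<in> e})" using e D(6) unfolding Z_def by blast
  qed
  have Z: "finite (\<Union>z\<in>Z. {e\<in>E. z \<in> e}) \<and> card (\<Union>z\<in>Z. {e\<in>E. z \<in> e}) \<le> \<Delta> * card Z"
    by (rule card_edges_at_le[OF deg ZV])
  have "card Z \<le> 2 * card P + 1"
  proof (cases "card Z \<le> 1")
    case False
    then have "\<not> (\<forall>z\<in>Z. \<forall>z'\<in>Z. z = z')" using card_le_Suc0_iff_eq[OF ZV(2)] by simp
    then obtain z z' where "z \<in> Z" "z' \<in> Z" "z \<noteq> z'" by blast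
    then have "Z \<subseteq> \<Union>P"
      using interface_boundary_vertex_in_P[OF G D(1,4,5,6)] unfolding Z_def by blast
    moreover have "finite (\<Union>P)" using finP D(5) graph_edge_card[OF G] by auto
    ultimately have "card Z \<le> card (\<Union>P)" by (rule card_mono[rotated])
    also have "\<dots> \<le> (\<Sum>e\<in>P. card e)" by (rule card_Union_le_sum_card)
    also have "\<dots> = 2 * card P" using D(5) graph_edge_card[OF G] by simp
    finally show ?thesis by simp
  qed simp
  then have "card dP \<le> \<Delta> * (2 * card P + 1)"
    using card_mono[OF _ sub] Z by (meson le_trans mult_le_mono2)
  then show ?thesis using finP finite_subset[OF sub] Z by blast
qed

lemma interface_card_le_vertices:
  assumes G: "graph V E" and deg: "degree_bounded V E \<Delta>" and I: "interface V E Pc x0 P dP"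
  shows "card P \<le> \<Delta> * card (\<Union>P) \<and> finite (\<Union>P) \<and> \<Union>P \<subseteq> V"
proof -
  obtain D where D: "D \<in> comps V (E - dP)" "finite D"
    "P = {e \<in> E - dP. e \<subseteq> D \<and> connects_edge V E Pc dP e (dirs dP D)}"
    using I by (elim interfaceE) (rule that)
  have "\<Union>P \<subseteq> D" using D(3) by blast
  then have UV: "\<Union>P \<subseteq> V" "finite (\<Union>P)"
    using comps_subset[OF D(1)] finite_subset[OF _ D(2)] by blast+
  have "P \<subseteq> (\<Union>v\<in>\<Union>P. {e\<in>E. v \<in> e})"
  proof
    fix e assume e: "e \<in> P"
    then have "e \<in> E" using D(3) by blast
    then obtain v where "v \<in> e" using graph_edge_card[OF G] by fastforce
    then show "e \<in> (\<Union>v\<in>\<Union>P. {e\<in>E. v \<in> e})" using e \<open>e \<in> E\<close> by blast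
  qed
  then have "card P \<le> card (\<Union>v\<in>\<Union>P. {e\<in>E. v \<in> e})"
    using card_edges_at_le[OF deg UV] by (intro card_mono) auto
  also have "\<dots> \<le> \<Delta> * card (\<Union>P)" using card_edges_at_le[OF deg UV] by blast
  finally show ?thesis using UV by blast
qed

lemma interface_boundary_vertices:
  assumes G: "graph V E" and deg: "degree_bounded V E \<Delta>" and I: "interface V E Pc x0 P dP"
  shows "finite (\<Union>dP) \<and> \<Union>dP \<subseteq> V \<and> card (\<Union>dP) \<le> 2 * card dP"
proof -
  have dE: "dP \<subseteq> E" and fdP: "finite dP"
    using interface_subset[OF I] interface_finite_boundary_le[OF G deg I] by auto
  have ef: "\<forall>e\<in>dP. finite e \<and> card e = 2" using graph_edge_card[OF G] dE by blast
  have "\<Union>dP \<subseteq> V"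
  proof
    fix v assume "v \<in> \<Union>dP"
    then obtain e where "e \<in> dP" "v \<in> e" by blast
    then show "v \<in> V" using graph_edgeE[OF G _ \<open>v \<in> e\<close>] dE by blast
  qed
  moreover have "card (\<Union>dP) \<le> (\<Sum>e\<in>dP. card e)" by (rule card_Union_le_sum_card)
  ultimately show ?thesis using fdP ef by simp
qed

definition edge_connected :: "'v set set \<Rightarrow> bool" where
  "edge_connected S \<longleftrightarrow> (\<forall>S1 S2. S1 \<union> S2 = S \<and> S1 \<inter> S2 = {} \<and> S1 \<noteq> {} \<and> S2 \<noteq> {} \<longrightarrow>
      (\<exists>e1\<in>S1. \<exists>e2\<in>S2. e1 \<inter> e2 \<noteq> {}))"

lemma walk_last_in_separated_part:
  assumes "walk_edges xs \<subseteq> S1 \<union> S2" "xs \<noteq> []" "hd xs \<in> \<Union>S1"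
    and "\<forall>e1\<in>S1. \<forall>e2\<in>S2. e1 \<inter> e2 = {}"
  shows "last xs \<in> \<Union>S1"
  using assms(1-3)
proof (induction xs rule: induct_list012)
  case (3 x y zs)
  have "x \<in> \<Union>S1" using "3.prems"(3) by simp
  then have "{x, y} \<notin> S2" using assms(4) by blast
  moreover have "{x, y} \<in> S1 \<union> S2" using "3.prems"(1) by simp
  ultimately have "y \<in> \<Union>S1" by blast
  moreover have "walk_edges (y # zs) \<subseteq> S1 \<union> S2" using "3.prems"(1) by simp
  ultimately have "last (y # zs) \<in> \<Union>S1" using "3.IH"(2) by simp
  then show ?case by simp
qed auto

lemma Ppath_last_in_separated_part:
  assumes "Ppath V E Pc F d j Q" "walk_edges Q \<subseteq> S1 \<union> S2" "{fst d, snd d} \<in> S1"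
    "{fst j, snd j} \<in> S1 \<union> S2" "\<forall>e1\<in>S1. \<forall>e2\<in>S2. e1 \<inter> e2 = {}"
  shows "{fst j, snd j} \<in> S1"
proof -
  have Q: "Q \<noteq> []" "hd Q = snd d" "last Q = snd j"
    using PpathD[OF assms(1)] by (auto simp: is_path_def)
  have "hd Q \<in> \<Union>S1" using Q(2) assms(3) by blast
  then have "snd j \<in> \<Union>S1"
    using walk_last_in_separated_part[OF assms(2) Q(1) _ assms(5)] Q(3) by simp
  then have "{fst j, snd j} \<notin> S2" using assms(5) by blast
  then show ?thesis using assms(4) by blast
qed

text \<open>An edge of \<open>P\<close> is joined to \<open>\<partial>P\<close> by a \<open>\<P>\<close>-path inside \<open>P\<close>, which cannot cross to the
  other part.\<close>
lemma separated_part_meets_boundary: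
  assumes G: "graph V E"
    and D: "D \<in> comps V (E - dP)" "\<forall>e\<in>dP. e \<inter> D \<noteq> {}"
      "P = {e \<in> E - dP. e \<subseteq> D \<and> connects_edge V E Pc dP e (dirs dP D)}" "dP \<subseteq> E"
    and S: "S1 \<union> S2 = P \<union> dP" and nt: "\<forall>e1\<in>S1. \<forall>e2\<in>S2. e1 \<inter> e2 = {}"
    and e: "e \<in> S1"
  shows "\<exists>j\<in>dirs dP D. {fst j, snd j} \<in> S1"
proof (cases "e \<in> dP")
  case True
  then obtain z where "z \<in> e" "z \<in> D" using D(2) by blast
  then obtain v where "e = {v, z}" "(v, z) \<in> dirs dP D" using dirs_memI[OF G D(4) True] by blast
  then show ?thesis using e by (intro bexI[of _ "(v, z)"]) auto
next
  case False
  then have "e \<in> P" using S e by blast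
  then have "connects_edge V E Pc dP e (dirs dP D)" "e \<subseteq> D" using D(3) by auto
  then obtain a b d j Q where ab: "e = {a, b}" "d \<in> {(a, b), (b, a)}" and j: "j \<in> dirs dP D"
    and pp: "Ppath V E Pc dP d j Q"
    unfolding connects_edge_def by blast
  have ed: "{fst d, snd d} = e" using ab by auto
  then have "snd d \<in> D" using \<open>e \<subseteq> D\<close> by blast
  then have "walk_edges Q \<subseteq> S1 \<union> S2" using Ppath_edges_in_interface[OF D(1,3) pp j] S by blast
  moreover have "{fst j, snd j} \<in> S1 \<union> S2" using dirs_edge[OF j] S by blast
  ultimately have "{fst j, snd j} \<in> S1"
    using Ppath_last_in_separated_part[OF pp _ _ _ nt] ed e by simp
  then show ?thesis using j by blast
qed

lemma interface_edge_connected: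
  assumes G: "graph V E" and I: "interface V E Pc x0 P dP"
  shows "edge_connected (P \<union> dP)"
  unfolding edge_connected_def
proof (intro allI impI)
  fix S1 S2 assume H: "S1 \<union> S2 = P \<union> dP \<and> S1 \<inter> S2 = {} \<and> S1 \<noteq> {} \<and> S2 \<noteq> {}"
  obtain D where D: "D \<in> comps V (E - dP)" "\<forall>e\<in>dP. e \<inter> D \<noteq> {}"
    "F_connected V E Pc dP (dirs dP D)"
    "P = {e \<in> E - dP. e \<subseteq> D \<and> connects_edge V E Pc dP e (dirs dP D)}" "dP \<subseteq> E"
    using I by (elim interfaceE) (rule that)
  show "\<exists>e1\<in>S1. \<exists>e2\<in>S2. e1 \<inter> e2 \<noteq> {}"
  proof (rule ccontr)
    assume "\<not> (\<exists>e1\<in>S1. \<exists>e2\<in>S2. e1 \<inter> e2 \<noteq> {})"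
    then have nt: "\<forall>e1\<in>S1. \<forall>e2\<in>S2. e1 \<inter> e2 = {}" and nt': "\<forall>e1\<in>S2. \<forall>e2\<in>S1. e1 \<inter> e2 = {}"
      by blast+
    have S: "S1 \<union> S2 = P \<union> dP" "S2 \<union> S1 = P \<union> dP" using H by auto
    obtain e1 e2 where "e1 \<in> S1" "e2 \<in> S2" using H by blast
    then have j1: "\<exists>j\<in>dirs dP D. {fst j, snd j} \<in> S1"
      and j2: "\<exists>j\<in>dirs dP D. {fst j, snd j} \<in> S2"
      using separated_part_meets_boundary[OF G D(1,2,4,5) S(1) nt]
        separated_part_meets_boundary[OF G D(1,2,4,5) S(2) nt'] by blast+
    let ?J1 = "{j \<in> dirs dP D. {fst j, snd j} \<in> S1}" and ?J2 = "{j \<in> dirs dP D. {fst j, snd j} \<in> S2}"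
    have "?J1 \<noteq> {}" "?J2 \<noteq> {}" "?J1 \<inter> ?J2 = {}" using j1 j2 H by blast+
    moreover have "?J1 \<union> ?J2 = dirs dP D" using dirs_edge S(1) by blast
    ultimately obtain d j Q where d: "d \<in> ?J1" and j: "j \<in> ?J2" and pp: "Ppath V E Pc dP d j Q"
      by (rule F_connectedE[OF D(3)])
    have "snd d \<in> D" using d dirs_edge by blast
    then have "walk_edges Q \<subseteq> S1 \<union> S2" using Ppath_edges_in_interface[OF D(1,4) pp] j S(1) by blast
    then have "{fst j, snd j} \<in> S1" using Ppath_last_in_separated_part[OF pp _ _ _ nt] d j by blast
    then show False using j H by blast
  qed
qed

section \<open>Counting anchored interfaces\<close>

definition meets :: "'a set \<Rightarrow> 'a set \<Rightarrow> bool" where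
  "meets e f \<longleftrightarrow> e \<inter> f \<noteq> {}"

lemma successively_insert_detour:
  assumes "successively R (A @ y # B)" "R y x" "R x y"
  shows "successively R (A @ y # x # y # B)"
  using assms by (auto simp: successively_append_iff successively_Cons)

text \<open>The chain is a closed tour grown one edge at a time: a new edge \<open>e2\<close> meeting an edge \<open>e1\<close>
  already visited is added by the detour \<open>e1, e2, e1\<close>.\<close>
lemma edge_connected_chain_aux:
  assumes "edge_connected S" "finite S" "r \<in> S" "k < card S"
  shows "\<exists>W. hd W = r \<and> set W \<subseteq> S \<and> card (set W) = Suc k \<and> successively meets W
    \<and> length W \<le> 2 * k + 1"
  using assms(4)
proof (induction k)
  case 0
  show ?case using assms(3) by (intro exI[of _ "[r]"]) simp
next
  case (Suc k)
  then obtain W where W: "hd W = r" "set W \<subseteq> S" "card (set W) = Suc k" "successively meets W"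
    "length W \<le> 2 * k + 1"
    by auto
  have "set W \<noteq> {}" "S - set W \<noteq> {}" using W(2,3) Suc.prems by auto
  moreover have "set W \<union> (S - set W) = S" "set W \<inter> (S - set W) = {}" using W(2) by auto
  ultimately obtain e1 e2 where e: "e1 \<in> set W" "e2 \<in> S - set W" "e1 \<inter> e2 \<noteq> {}"
    using assms(1)[unfolded edge_connected_def, rule_format, of "set W" "S - set W"] by blast
  obtain A B where AB: "W = A @ e1 # B" using split_list[OF e(1)] by blast
  let ?W = "A @ e1 # e2 # e1 # B"
  have "successively meets ?W"
    using successively_insert_detour[of meets A e1 B e2] W(4) e(3) AB by (auto simp: meets_def)
  moreover have "hd ?W = r" using W(1) AB by (cases A) simp_all
  moreover have "set ?W = insert e2 (set W)" using AB by auto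
  moreover have "finite (set W)" by simp
  ultimately show ?case using W(2,3,5) e(2) AB by (intro exI[of _ ?W]) auto
qed

lemma edge_connected_chain:
  assumes "edge_connected S" "finite S" "r \<in> S"
  obtains W where "hd W = r" "set W = S" "successively meets W" "length W \<le> 2 * card S"
proof -
  have "0 < card S" using assms(2,3) by (auto simp: card_gt_0_iff)
  then obtain W where W: "hd W = r" "set W \<subseteq> S" "card (set W) = card S" "successively meets W"
    "length W \<le> 2 * card S"
    using edge_connected_chain_aux[OF assms, of "card S - 1"] by auto
  then show ?thesis using that card_subset_eq[OF assms(2) W(2,3)] by blast
qed

lemma card_chains_le:
  assumes X: "\<forall>x\<in>X. finite {y\<in>X. R x y} \<and> card {y\<in>X. R x y} \<le> D"
    and A: "finite A" "card A \<le> D"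
  shows "finite {W. length W = Suc l \<and> hd W \<in> A \<and> set W \<subseteq> X \<and> successively R W}
       \<and> card {W. length W = Suc l \<and> hd W \<in> A \<and> set W \<subseteq> X \<and> successively R W} \<le> D ^ Suc l"
proof (induction l)
  case 0
  have sub: "{W. length W = Suc 0 \<and> hd W \<in> A \<and> set W \<subseteq> X \<and> successively R W} \<subseteq> (\<lambda>a. [a]) ` A"
    by (auto simp: length_Suc_conv)
  have "card ((\<lambda>a. [a]) ` A) \<le> D" using A card_image_le[OF A(1), of "\<lambda>a. [a]"] by simp
  then show ?case using card_mono[OF finite_imageI[OF A(1)] sub] finite_subset[OF sub finite_imageI[OF A(1)]]
    by simp
next
  case (Suc l)
  let ?T = "{W. length W = Suc l \<and> hd W \<in> A \<and> set W \<subseteq> X \<and> successively R W}"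
  let ?T' = "{W. length W = Suc (Suc l) \<and> hd W \<in> A \<and> set W \<subseteq> X \<and> successively R W}"
  let ?S = "SIGMA W:?T. {y\<in>X. R (last W) y}"
  have sub: "?T' \<subseteq> (\<lambda>(W, y). W @ [y]) ` ?S"
  proof
    fix W assume W: "W \<in> ?T'"
    then have "W \<noteq> []" by auto
    then have Wd: "W = butlast W @ [last W]" by simp
    have ne: "butlast W \<noteq> []" using W by (cases W rule: rev_cases) auto
    have "successively R (butlast W) \<and> R (last (butlast W)) (last W)"
      using W ne successively_append_iff[of R "butlast W" "[last W]"] Wd by simp
    moreover have "hd (butlast W) = hd W" using ne Wd by (metis hd_append2)
    moreover have "set (butlast W) \<subseteq> X" "last W \<in> X"
      using W \<open>W \<noteq> []\<close> in_set_butlastD[of _ W] last_in_set[of W] by blast+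
    ultimately have "(butlast W, last W) \<in> ?S" using W ne by simp
    then show "W \<in> (\<lambda>(W, y). W @ [y]) ` ?S" using Wd(1) by force
  qed
  have fin2: "finite {y\<in>X. R (last W) y} \<and> card {y\<in>X. R (last W) y} \<le> D" if "W \<in> ?T" for W
  proof -
    have "W \<noteq> []" using that by auto
    then have "last W \<in> X" using that last_in_set[of W] by blast
    then show ?thesis using X by blast
  qed
  have finS: "finite ?S" using Suc.IH fin2 by auto
  have "card ?T' \<le> card ?S"
    using card_mono[OF finite_imageI[OF finS] sub] card_image_le[OF finS, of "\<lambda>(W, y). W @ [y]"]
    by linarith
  also have "\<dots> = (\<Sum>W\<in>?T. card {y\<in>X. R (last W) y})" using Suc.IH fin2 by (intro card_SigmaI) auto
  also have "\<dots> \<le> (\<Sum>W\<in>?T. D)" using fin2 by (intro sum_mono) blast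
  also have "\<dots> \<le> D ^ Suc (Suc l)" using Suc.IH by (simp add: mult.commute)
  finally show ?case using finite_subset[OF sub finite_imageI[OF finS]] by blast
qed

fun walk_edge_list :: "'v list \<Rightarrow> 'v set list" where
  "walk_edge_list (x # y # xs) = {x, y} # walk_edge_list (y # xs)"
| "walk_edge_list _ = []"

lemma set_walk_edge_list: "set (walk_edge_list xs) = walk_edges xs"
  by (induction xs rule: walk_edge_list.induct) auto

lemma length_walk_edge_list: "length (walk_edge_list xs) = length xs - 1"
  by (induction xs rule: walk_edge_list.induct) auto

lemma successively_meets_walk_edge_list: "successively meets (walk_edge_list xs)"
proof (induction xs rule: walk_edge_list.induct)
  case (1 x y xs)
  then show ?case by (cases xs) (auto simp: meets_def)
qed auto

lemma hd_walk_edge_list: "length xs \<ge> 2 \<Longrightarrow> hd xs \<in> hd (walk_edge_list xs)"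
  by (cases xs rule: walk_edge_list.cases) auto

lemma last_walk_edge_list: "length xs \<ge> 2 \<Longrightarrow> last xs \<in> last (walk_edge_list xs)"
proof (induction xs rule: walk_edge_list.induct)
  case (1 x y xs)
  then show ?case by (cases xs) auto
qed auto

lemma walk_edge_list_append_chain:
  assumes "w \<noteq> []" "Wc \<noteq> []" "last w \<in> hd Wc" "successively meets Wc"
  shows "successively meets (walk_edge_list w @ Wc) \<and> hd w \<in> hd (walk_edge_list w @ Wc)"
proof (cases "length w \<ge> 2")
  case True
  then have "length (walk_edge_list w) > 0" by (simp add: length_walk_edge_list)
  then have ne: "walk_edge_list w \<noteq> []" by simp
  have "meets (last (walk_edge_list w)) (hd Wc)"
    using last_walk_edge_list[OF True] assms(3) by (auto simp: meets_def)
  then have "successively meets (walk_edge_list w @ Wc)"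
    using successively_meets_walk_edge_list[of w] assms(2,4) ne by (simp add: successively_append_iff)
  then show ?thesis using ne hd_walk_edge_list[OF True] by simp
next
  case False
  then obtain x where "w = [x]" using assms(1) by (cases w) (auto simp: Suc_le_eq)
  then show ?thesis using assms(3,4) by simp
qed

lemma card_meeting_edges_le:
  assumes G: "graph V E" and deg: "degree_bounded V E \<Delta>" and e: "e \<in> E"
  shows "finite {f\<in>E. meets e f} \<and> card {f\<in>E. meets e f} \<le> 2 * \<Delta> + 1"
proof -
  obtain u w where uw: "u \<in> V" "w \<in> V" "e = {u, w}" using G e unfolding graph_def by blast
  have sub: "{f\<in>E. meets e f} \<subseteq> {f\<in>E. u \<in> f} \<union> {f\<in>E. w \<in> f}"
    unfolding meets_def uw(3) by blast
  have u: "finite {f\<in>E. u \<in> f}" "card {f\<in>E. u \<in> f} \<le> \<Delta>"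
    and w: "finite {f\<in>E. w \<in> f}" "card {f\<in>E. w \<in> f} \<le> \<Delta>"
    using degree_boundedD[OF deg uw(1)] degree_boundedD[OF deg uw(2)] by auto
  have "card {f\<in>E. meets e f} \<le> card ({f\<in>E. u \<in> f} \<union> {f\<in>E. w \<in> f})"
    using u(1) w(1) by (intro card_mono[OF _ sub]) simp
  also have "\<dots> \<le> card {f\<in>E. u \<in> f} + card {f\<in>E. w \<in> f}" by (rule card_Un_le)
  finally show ?thesis using u w finite_subset[OF sub] by simp
qed

lemma card_edge_chains_le:
  fixes k :: nat
  assumes G: "graph V E" and deg: "degree_bounded V E \<Delta>" and x0: "x0 \<in> V"
  defines "L \<equiv> {W. W \<noteq> [] \<and> length W \<le> k \<and> hd W \<in> {e\<in>E. x0 \<in> e} \<and> set W \<subseteq> E \<and> successively meets W}"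
  shows "finite L \<and> card L \<le> k * (2 * \<Delta> + 1) ^ k"
proof -
  let ?D = "2 * \<Delta> + 1"
  let ?T = "\<lambda>l. {W. length W = Suc l \<and> hd W \<in> {e\<in>E. x0 \<in> e} \<and> set W \<subseteq> E \<and> successively meets W}"
  have T: "finite (?T l) \<and> card (?T l) \<le> ?D ^ Suc l" for l
    using degree_boundedD[OF deg x0] card_meeting_edges_le[OF G deg]
    by (intro card_chains_le) auto
  have sub: "L \<subseteq> (\<Union>l<k. ?T l)"
  proof
    fix W assume W: "W \<in> L"
    then have "length W = Suc (length W - 1)" "length W - 1 < k" unfolding L_def by (cases W; auto)+
    then show "W \<in> (\<Union>l<k. ?T l)" using W unfolding L_def by blast
  qed
  have "card (\<Union>l<k. ?T l) \<le> (\<Sum>l<k. card (?T l))" by (rule card_UN_le) simp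
  also have "\<dots> \<le> (\<Sum>l<k. ?D ^ k)"
  proof (rule sum_mono)
    fix l assume "l \<in> {..<k}"
    then have "?D ^ Suc l \<le> ?D ^ k" by (intro power_increasing) auto
    then show "card (?T l) \<le> ?D ^ k" using T[of l] by linarith
  qed
  finally show ?thesis using card_mono[OF _ sub] finite_subset[OF sub] T by simp
qed

definition interfaces_anchored :: "'v set \<Rightarrow> 'v set set \<Rightarrow> 'v set set set \<Rightarrow> 'v \<Rightarrow> nat \<Rightarrow> bool" where
  "interfaces_anchored V E Pc x0 K \<longleftrightarrow> (\<forall>P dP. interface V E Pc x0 P dP \<longrightarrow>
     (\<exists>y\<in>\<Union>dP. \<exists>w. walk V E w \<and> hd w = x0 \<and> last w = y \<and> length w \<le> K * card dP + 1))"

text \<open>The chain: the edges of a short walk from \<open>x0\<close> to \<open>\<partial>P\<close>, followed by a tour of the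
  edge-connected set \<open>P \<union> \<partial>P\<close>.\<close>
lemma anchored_interface_chain:
  assumes G: "graph V E" and deg: "degree_bounded V E \<Delta>" and anch: "interfaces_anchored V E Pc x0 K"
    and I: "interface V E Pc x0 P dP" and m: "card P \<le> m"
  obtains W where "W \<noteq> []" "length W \<le> K * (\<Delta> * (2 * m + 1)) + 2 * (m + \<Delta> * (2 * m + 1))"
    "hd W \<in> {e\<in>E. x0 \<in> e}" "set W \<subseteq> E" "successively meets W" "dP \<subseteq> set W"
proof -
  let ?b = "\<Delta> * (2 * m + 1)"
  have bnd: "finite P" "finite dP" "card dP \<le> \<Delta> * (2 * card P + 1)"
    using interface_finite_boundary_le[OF G deg I] by auto
  moreover have "\<Delta> * (2 * card P + 1) \<le> ?b" using m by (intro mult_le_mono2) simp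
  ultimately have bnd: "finite P" "finite dP" "card dP \<le> ?b" by linarith+
  obtain y w where y: "y \<in> \<Union>dP" and w: "walk V E w" "hd w = x0" "last w = y" "length w \<le> K * card dP + 1"
    using anch I unfolding interfaces_anchored_def by blast
  obtain r where r: "r \<in> dP" "y \<in> r" using y by blast
  have SE: "P \<union> dP \<subseteq> E" using interface_subset[OF I] by blast
  obtain Wc where Wc: "hd Wc = r" "set Wc = P \<union> dP" "successively meets Wc"
    "length Wc \<le> 2 * card (P \<union> dP)"
    using edge_connected_chain[OF interface_edge_connected[OF G I]] bnd r by blast
  let ?W = "walk_edge_list w @ Wc"
  have "Wc \<noteq> []" using Wc(2) r(1) by auto
  have "K * card dP \<le> K * ?b" using bnd(3) by (rule mult_le_mono2)
  then have "length (walk_edge_list w) \<le> K * ?b"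
    using w(4) unfolding length_walk_edge_list by linarith
  moreover have "card (P \<union> dP) \<le> m + ?b" using card_Un_le[of P dP] m bnd(3) by linarith
  ultimately have len: "length ?W \<le> K * ?b + 2 * (m + ?b)" using Wc(4) by simp
  have setW: "set ?W \<subseteq> E" using w(1) SE Wc(2) by (auto simp: set_walk_edge_list walk_def)
  have "w \<noteq> []" using w(1) by (simp add: walk_def)
  then have "successively meets ?W \<and> x0 \<in> hd ?W"
    using walk_edge_list_append_chain[of w Wc] \<open>Wc \<noteq> []\<close> w(2,3) r(2) Wc(1,3) by simp
  moreover have "hd ?W \<in> set ?W" using \<open>Wc \<noteq> []\<close> by (cases "walk_edge_list w") simp_all
  ultimately have "hd ?W \<in> {e\<in>E. x0 \<in> e} \<and> successively meets ?W" using setW by blast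
  then show ?thesis using that[of ?W] \<open>Wc \<noteq> []\<close> len setW Wc(2) by auto
qed

lemma inj_on_snd_interfaces: "inj_on snd {(P, dP). interface V E Pc x0 P dP \<and> Q P}"
proof (rule inj_onI)
  fix x y assume "x \<in> {(P, dP). interface V E Pc x0 P dP \<and> Q P}" "y \<in> {(P, dP). interface V E Pc x0 P dP \<and> Q P}"
    and "snd x = snd y"
  then have "interface V E Pc x0 (fst x) (snd x)" "interface V E Pc x0 (fst y) (snd x)" by auto
  then have "fst x = fst y" by (rule interface_unique)
  then show "x = y" using \<open>snd x = snd y\<close> by (rule prod_eqI)
qed

lemma card_anchored_interfaces_le:
  assumes G: "graph V E" and deg: "degree_bounded V E \<Delta>" and x0: "x0 \<in> V"
    and anch: "interfaces_anchored V E Pc x0 K"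
  obtains C :: nat where "1 \<le> C"
    "\<And>m. finite {(P, dP). interface V E Pc x0 P dP \<and> card P \<le> m}
       \<and> card {(P, dP). interface V E Pc x0 P dP \<and> card P \<le> m} \<le> C ^ (m + 1)"
proof
  let ?D = "2 * \<Delta> + 1"
  let ?C = "(4 * ?D) ^ (2 * K * \<Delta> + 2 + 4 * \<Delta>)"
  show "1 \<le> ?C" by simp
  fix m
  define k where "k = K * (\<Delta> * (2 * m + 1)) + 2 * (m + \<Delta> * (2 * m + 1))"
  define L where "L = {W. W \<noteq> [] \<and> length W \<le> k \<and> hd W \<in> {e\<in>E. x0 \<in> e} \<and> set W \<subseteq> E \<and> successively meets W}"
  define Ints where "Ints = {(P, dP). interface V E Pc x0 P dP \<and> card P \<le> m}"
  have L: "finite L" "card L \<le> k * ?D ^ k" using card_edge_chains_le[OF G deg x0, of k] unfolding L_def by auto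
  have inj: "inj_on snd Ints" unfolding Ints_def by (rule inj_on_snd_interfaces)
  have img: "snd ` Ints \<subseteq> (\<Union>W\<in>L. Pow (set W))"
  proof
    fix dP assume "dP \<in> snd ` Ints"
    then obtain P where "interface V E Pc x0 P dP" "card P \<le> m" unfolding Ints_def by auto
    then obtain W where "W \<in> L" "dP \<subseteq> set W"
      using anchored_interface_chain[OF G deg anch] unfolding L_def k_def by (metis (mono_tags, lifting) mem_Collect_eq)
    then show "dP \<in> (\<Union>W\<in>L. Pow (set W))" by blast
  qed
  have finU: "finite (\<Union>W\<in>L. Pow (set W))" using L(1) by simp
  have "card (snd ` Ints) \<le> (\<Sum>W\<in>L. card (Pow (set W)))"
    using card_mono[OF finU img] card_UN_le[OF L(1), of "\<lambda>W. Pow (set W)"] by linarith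
  also have "\<dots> \<le> (\<Sum>W\<in>L. 2 ^ k)"
  proof (rule sum_mono)
    fix W assume "W \<in> L"
    then have "card (set W) \<le> k" unfolding L_def using card_length[of W] by auto
    then show "card (Pow (set W)) \<le> 2 ^ k" by (simp add: card_Pow power_increasing)
  qed
  also have "\<dots> = card L * 2 ^ k" by simp
  also have "\<dots> \<le> k * ?D ^ k * 2 ^ k" using L(2) by (rule mult_le_mono1)
  also have "\<dots> \<le> 2 ^ k * ?D ^ k * 2 ^ k" using less_exp[of k] by simp
  also have "\<dots> = (2 * ?D * 2) ^ k" by (simp only: power_mult_distrib)
  also have "\<dots> = (4 * ?D) ^ k" by (rule arg_cong[of _ _ "\<lambda>x. x ^ k"]) linarith
  also have "\<dots> \<le> ?C ^ (m + 1)"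
    unfolding power_mult[symmetric] by (rule power_increasing) (simp_all add: k_def algebra_simps)
  finally show "finite Ints \<and> card Ints \<le> ?C ^ (m + 1)"
    using card_image[OF inj] finite_imageD[OF finite_subset[OF img finU] inj] by simp
qed

section \<open>Growth rates of Bernoulli sums\<close>

lemma continuous_on_if_ratio_bound:
  fixes f :: "real \<Rightarrow> real" and L :: "real \<Rightarrow> real \<Rightarrow> real"
  assumes S: "open S" and f: "\<And>p. p \<in> S \<Longrightarrow> 0 \<le> f p \<and> f p \<le> U"
    and ratio: "\<And>p q. p \<in> S \<Longrightarrow> q \<in> S \<Longrightarrow> f q \<le> L p q * f p"
    and L: "\<And>p. p \<in> S \<Longrightarrow> isCont (L p) p \<and> isCont (\<lambda>q. L q p) p \<and> L p p = 1"
  shows "continuous_on S f"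
proof -
  have "isCont f p" if p: "p \<in> S" for p
  proof -
    define g where "g q = U * (\<bar>L p q - 1\<bar> + \<bar>L q p - 1\<bar>)" for q
    have "eventually (\<lambda>q. norm (f q - f p) \<le> g q) (at p)"
      using eventually_at_in_open'[OF S p]
    proof eventually_elim
      case (elim q)
      have "f q - f p \<le> (L p q - 1) * f p" using ratio[OF p elim] by (simp add: algebra_simps)
      also have "\<dots> \<le> \<bar>L p q - 1\<bar> * U" using f[OF p] by (meson abs_ge_self abs_ge_zero mult_mono order.trans)
      finally have 1: "f q - f p \<le> \<bar>L p q - 1\<bar> * U" .
      have "f p - f q \<le> (L q p - 1) * f q" using ratio[OF elim p] by (simp add: algebra_simps)
      also have "\<dots> \<le> \<bar>L q p - 1\<bar> * U" using f[OF elim] by (meson abs_ge_self abs_ge_zero mult_mono order.trans)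
      finally have 2: "f p - f q \<le> \<bar>L q p - 1\<bar> * U" .
      have "0 \<le> U" using f[OF p] by linarith
      then have "0 \<le> \<bar>L p q - 1\<bar> * U" "0 \<le> \<bar>L q p - 1\<bar> * U" by simp_all
      then show ?case using 1 2 unfolding g_def real_norm_def abs_le_iff by (simp add: algebra_simps)
    qed
    moreover have "(g \<longlongrightarrow> 0) (at p)"
    proof -
      have "isCont g p" unfolding g_def using L[OF p] by (intro continuous_intros) auto
      then show ?thesis using L[OF p] unfolding isCont_def g_def by simp
    qed
    ultimately have "((\<lambda>q. f q - f p) \<longlongrightarrow> 0) (at p)" by (rule Lim_null_comparison)
    then show ?thesis unfolding isCont_def by (rule LIM_zero_cancel)
  qed
  then show ?thesis by (simp add: continuous_at_imp_continuous_on)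
qed

definition growth_rate :: "(nat \<Rightarrow> 'x set) \<Rightarrow> ('x \<Rightarrow> nat) \<Rightarrow> real \<Rightarrow> ereal" where
  "growth_rate F m p = limsup (\<lambda>n. ereal (root n (\<Sum>x\<in>F n. p ^ n * (1 - p) ^ m x)))"

lemma power_mix_ratio_le:
  fixes p q :: real and n m C :: nat
  assumes p: "0 < p" "p < 1" and q: "0 < q" "q < 1" and mb: "m \<le> C * n"
  shows "q ^ n * (1 - q) ^ m \<le> (q / p * max 1 ((1 - q) / (1 - p)) ^ C) ^ n * (p ^ n * (1 - p) ^ m)"
proof -
  define \<rho> where "\<rho> = max 1 ((1 - q) / (1 - p))"
  have "((1 - q) / (1 - p)) ^ m \<le> \<rho> ^ m"
    unfolding \<rho>_def using p q by (intro power_mono) auto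
  also have "\<dots> \<le> \<rho> ^ (C * n)" unfolding \<rho>_def using mb by (intro power_increasing) auto
  finally have le: "((1 - q) / (1 - p)) ^ m \<le> \<rho> ^ (C * n)" .
  have "q ^ n * (1 - q) ^ m = ((q / p) ^ n * p ^ n) * (((1 - q) / (1 - p)) ^ m * (1 - p) ^ m)"
    using p by (simp add: power_divide)
  also have "\<dots> \<le> ((q / p) ^ n * p ^ n) * (\<rho> ^ (C * n) * (1 - p) ^ m)"
    using le p q by (intro mult_left_mono mult_right_mono) simp_all
  also have "\<dots> = ((q / p) ^ n * \<rho> ^ (C * n)) * (p ^ n * (1 - p) ^ m)"
    by (simp only: mult_ac)
  also have "\<dots> = (q / p * \<rho> ^ C) ^ n * (p ^ n * (1 - p) ^ m)"
    by (simp only: power_mult_distrib power_mult)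
  finally show ?thesis unfolding \<rho>_def .
qed

lemma growth_rate_bounds:
  assumes U: "0 \<le> U" and cnt: "\<And>n. n \<ge> 1 \<Longrightarrow> real (card (F n)) \<le> U ^ n"
    and p: "0 < p" "p < 1"
  shows "0 \<le> growth_rate F m p \<and> growth_rate F m p \<le> ereal U"
proof -
  define en where "en n = (\<Sum>x\<in>F n. p ^ n * (1 - p) ^ m x)" for n
  have "0 \<le> root n (en n) \<and> root n (en n) \<le> U" for n
  proof (cases "n = 0")
    case False
    have "en n \<le> (\<Sum>x\<in>F n. 1)" unfolding en_def
      using p by (intro sum_mono mult_le_one power_le_one) simp_all
    also have "\<dots> \<le> U ^ n" using cnt False by simp
    finally have "root n (en n) \<le> root n (U ^ n)" using False by simp
    also have "\<dots> = U" using False U by (simp add: real_root_power_cancel)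
    finally have "root n (en n) \<le> U" .
    moreover have "0 \<le> en n" unfolding en_def using p by (intro sum_nonneg) simp
    ultimately show ?thesis by (simp add: real_root_ge_zero)
  qed (use U in simp)
  then show ?thesis
    unfolding growth_rate_def en_def[symmetric] by (intro conjI le_Limsup Limsup_bounded) simp_all
qed

text \<open>Each exponent \<open>m x\<close> is at most linear in \<open>n\<close>, so passing from \<open>p\<close> to \<open>q\<close> changes every term
  of the \<open>n\<close>-th sum by at most the \<open>n\<close>-th power of a factor that tends to \<open>1\<close> as \<open>q \<rightarrow> p\<close>.\<close>
lemma growth_rate_ratio_le:
  fixes C :: nat
  assumes mb: "\<And>n x. n \<ge> 1 \<Longrightarrow> x \<in> F n \<Longrightarrow> m x \<le> C * n"
    and p: "0 < p" "p < 1" and q: "0 < q" "q < 1"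
  shows "growth_rate F m q \<le> ereal (q / p * max 1 ((1 - q) / (1 - p)) ^ C) * growth_rate F m p"
proof -
  define en where "en p n = (\<Sum>x\<in>F n. p ^ n * (1 - p) ^ m x)" for p :: real and n
  define L where "L = q / p * max 1 ((1 - q) / (1 - p)) ^ C"
  have L0: "0 \<le> L" unfolding L_def using p q by simp
  have "root n (en q n) \<le> L * root n (en p n)" for n
  proof (cases "n = 0")
    case False
    have "en q n \<le> L ^ n * en p n"
      unfolding en_def L_def sum_distrib_left
      using power_mix_ratio_le[OF p q] mb False by (intro sum_mono) simp
    then have "root n (en q n) \<le> root n (L ^ n * en p n)" using False by simp
    also have "\<dots> = L * root n (en p n)"
      using False L0 by (simp add: real_root_mult real_root_power_cancel)
    finally show ?thesis .
  qed simp
  then have "growth_rate F m q \<le> limsup (\<lambda>n. ereal L * ereal (root n (en p n)))"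
    unfolding growth_rate_def en_def[symmetric] by (intro Limsup_mono) simp
  also have "\<dots> = ereal L * growth_rate F m p"
    unfolding growth_rate_def en_def[symmetric] by (rule limsup_ereal_mult_left) (use L0 in simp)
  finally show ?thesis unfolding L_def .
qed

lemma continuous_growth_rate:
  fixes U :: real and C :: nat
  assumes U: "0 \<le> U" and cnt: "\<And>n. n \<ge> 1 \<Longrightarrow> real (card (F n)) \<le> U ^ n"
    and mb: "\<And>n x. n \<ge> 1 \<Longrightarrow> x \<in> F n \<Longrightarrow> m x \<le> C * n"
  shows "continuous_on_01 (growth_rate F m)"
proof -
  define L where "L p q = q / p * max 1 ((1 - q) / (1 - p)) ^ C" for p q :: real
  define f where "f p = real_of_ereal (growth_rate F m p)" for p
  have bounds: "0 \<le> growth_rate F m p \<and> growth_rate F m p \<le> ereal U" if "p \<in> {0<..<1}" for p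
    using growth_rate_bounds[OF U cnt] that by simp
  have f_eq: "growth_rate F m p = ereal (f p)" if "p \<in> {0<..<1}" for p
    using bounds[OF that] unfolding f_def by (cases "growth_rate F m p") auto
  have "continuous_on {0<..<1} f"
  proof (rule continuous_on_if_ratio_bound[where f=f and U=U and L=L])
    show "0 \<le> f p \<and> f p \<le> U" if "p \<in> {0<..<1}" for p
      using bounds[OF that] f_eq[OF that] by simp
    show "f q \<le> L p q * f p" if "p \<in> {0<..<1}" "q \<in> {0<..<1}" for p q
    proof -
      have "ereal (f q) \<le> ereal (L p q) * ereal (f p)"
        using growth_rate_ratio_le[where F=F and m=m and C=C and p=p and q=q, OF mb] f_eq that
        unfolding L_def by simp
      then show ?thesis by simp
    qed
    show "isCont (L p) p \<and> isCont (\<lambda>q. L q p) p \<and> L p p = 1" if "p \<in> {0<..<1}" for p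
      using that unfolding L_def by (auto intro!: continuous_intros)
  qed simp
  then show ?thesis unfolding continuous_on_01_def using f_eq by (intro exI[of _ f]) auto
qed

lemma bernoulli_cylinder:
  fixes I A B :: "'i set" and p :: real
  defines "M \<equiv> PiM I (\<lambda>_. measure_pmf (bernoulli_pmf p))"
  assumes "finite A" "finite B" "A \<subseteq> I" "B \<subseteq> I" "A \<inter> B = {}" "0 \<le> p" "p \<le> 1"
  shows "{\<omega> \<in> space M. (\<forall>e\<in>A. \<omega> e) \<and> (\<forall>e\<in>B. \<not> \<omega> e)} \<in> sets M"
    and "emeasure M {\<omega> \<in> space M. (\<forall>e\<in>A. \<omega> e) \<and> (\<forall>e\<in>B. \<not> \<omega> e)}
         = ennreal (p ^ card A * (1 - p) ^ card B)"
proof -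
  let ?M = "\<lambda>_::'i. measure_pmf (bernoulli_pmf p)"
  let ?X = "\<lambda>e. if e \<in> A then {True} else {False}"
  have eq: "{\<omega> \<in> space M. (\<forall>e\<in>A. \<omega> e) \<and> (\<forall>e\<in>B. \<not> \<omega> e)}
     = prod_emb I ?M (A \<union> B) (PiE (A \<union> B) ?X)"
    unfolding M_def using assms(6)
    by (auto simp: prod_emb_def space_PiM restrict_PiE_iff Pi_iff split: if_splits; blast)
  show "{\<omega> \<in> space M. (\<forall>e\<in>A. \<omega> e) \<and> (\<forall>e\<in>B. \<not> \<omega> e)} \<in> sets M"
    unfolding eq unfolding M_def by (rule sets_PiM_I) (use assms in auto)
  have "emeasure M (prod_emb I ?M (A \<union> B) (PiE (A \<union> B) ?X)) = (\<Prod>e\<in>A \<union> B. emeasure (?M e) (?X e))"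
    unfolding M_def by (rule emeasure_PiM_emb) (use assms in \<open>auto simp: prob_space_measure_pmf\<close>)
  also have "\<dots> = (\<Prod>e\<in>A. emeasure (?M e) (?X e)) * (\<Prod>e\<in>B. emeasure (?M e) (?X e))"
    by (rule prod.union_disjoint) (use assms in auto)
  also have "(\<Prod>e\<in>A. emeasure (?M e) (?X e)) = (\<Prod>e\<in>A. ennreal p)"
    using assms by (intro prod.cong) (auto simp: emeasure_pmf_single)
  also have "(\<Prod>e\<in>B. emeasure (?M e) (?X e)) = (\<Prod>e\<in>B. ennreal (1 - p))"
    using assms by (intro prod.cong) (auto simp: emeasure_pmf_single)
  finally show "emeasure M {\<omega> \<in> space M. (\<forall>e\<in>A. \<omega> e) \<and> (\<forall>e\<in>B. \<not> \<omega> e)}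
      = ennreal (p ^ card A * (1 - p) ^ card B)"
    using eq assms by (simp add: prod_ennreal ennreal_mult' ennreal_power)
qed

lemma expected_occurrences:
  fixes I :: "'i set" and F :: "('i set \<times> 'i set) set" and p :: real
  defines "M \<equiv> PiM I (\<lambda>_. measure_pmf (bernoulli_pmf p))"
  assumes fin: "finite F"
    and FI: "\<And>x. x \<in> F \<Longrightarrow> finite (fst x) \<and> finite (snd x) \<and> fst x \<subseteq> I \<and> snd x \<subseteq> I \<and> fst x \<inter> snd x = {}"
    and p: "0 \<le> p" "p \<le> 1"
  shows "(\<integral>\<^sup>+\<omega>. ecard {x\<in>F. (\<forall>e\<in>fst x. \<omega> e) \<and> (\<forall>e\<in>snd x. \<not> \<omega> e)} \<partial>M)
     = ennreal (\<Sum>x\<in>F. p ^ card (fst x) * (1 - p) ^ card (snd x))"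
proof -
  define A where "A x = {\<omega> \<in> space M. (\<forall>e\<in>fst x. \<omega> e) \<and> (\<forall>e\<in>snd x. \<not> \<omega> e)}" for x
  have A: "A x \<in> sets M" "emeasure M (A x) = ennreal (p ^ card (fst x) * (1 - p) ^ card (snd x))"
    if "x \<in> F" for x
    using bernoulli_cylinder[of "fst x" "snd x" I p] FI[OF that] p unfolding A_def M_def by auto
  have "(\<integral>\<^sup>+\<omega>. ecard {x\<in>F. (\<forall>e\<in>fst x. \<omega> e) \<and> (\<forall>e\<in>snd x. \<not> \<omega> e)} \<partial>M)
      = (\<integral>\<^sup>+\<omega>. (\<Sum>x\<in>F. indicator (A x) \<omega>) \<partial>M)"
  proof (rule nn_integral_cong)
    fix \<omega> assume \<omega>: "\<omega> \<in> space M"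
    have "ecard {x\<in>F. (\<forall>e\<in>fst x. \<omega> e) \<and> (\<forall>e\<in>snd x. \<not> \<omega> e)}
        = of_nat (card {x\<in>F. (\<forall>e\<in>fst x. \<omega> e) \<and> (\<forall>e\<in>snd x. \<not> \<omega> e)})"
      using fin by (simp add: ecard_def)
    also have "\<dots> = (\<Sum>x\<in>F. indicator (A x) \<omega>)"
      unfolding A_def using \<omega> fin
      by (simp add: indicator_def sum.If_cases of_nat_sum[symmetric] Int_def)
    finally show "ecard {x\<in>F. (\<forall>e\<in>fst x. \<omega> e) \<and> (\<forall>e\<in>snd x. \<not> \<omega> e)} = (\<Sum>x\<in>F. indicator (A x) \<omega>)" .
  qed
  also have "\<dots> = (\<Sum>x\<in>F. \<integral>\<^sup>+\<omega>. indicator (A x) \<omega> \<partial>M)"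
    by (rule nn_integral_sum) (use A in simp)
  also have "\<dots> = (\<Sum>x\<in>F. ennreal (p ^ card (fst x) * (1 - p) ^ card (snd x)))"
    using A by (intro sum.cong) simp_all
  also have "\<dots> = ennreal (\<Sum>x\<in>F. p ^ card (fst x) * (1 - p) ^ card (snd x))"
    using p by (intro sum_ennreal) simp
  finally show ?thesis .
qed

lemma limsup_root_expected_occurrences:
  fixes I :: "'i set" and F :: "nat \<Rightarrow> ('i set \<times> 'i set) set"
  assumes fin: "\<And>n. finite (F n)"
    and FI: "\<And>n x. x \<in> F n \<Longrightarrow> finite (fst x) \<and> finite (snd x) \<and> fst x \<subseteq> I \<and> snd x \<subseteq> I
        \<and> fst x \<inter> snd x = {} \<and> card (fst x) = n"
    and p: "0 \<le> p" "p \<le> 1"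
  shows "limsup (\<lambda>n. eroot n (\<integral>\<^sup>+\<omega>. ecard {x\<in>F n. (\<forall>e\<in>fst x. \<omega> e) \<and> (\<forall>e\<in>snd x. \<not> \<omega> e)}
      \<partial>PiM I (\<lambda>_. measure_pmf (bernoulli_pmf p)))) = growth_rate F (card \<circ> snd) p"
proof -
  have "(\<integral>\<^sup>+\<omega>. ecard {x\<in>F n. (\<forall>e\<in>fst x. \<omega> e) \<and> (\<forall>e\<in>snd x. \<not> \<omega> e)}
      \<partial>PiM I (\<lambda>_. measure_pmf (bernoulli_pmf p))) = ennreal (\<Sum>x\<in>F n. p ^ n * (1 - p) ^ (card \<circ> snd) x)"
    for n
  proof -
    have "(\<integral>\<^sup>+\<omega>. ecard {x\<in>F n. (\<forall>e\<in>fst x. \<omega> e) \<and> (\<forall>e\<in>snd x. \<not> \<omega> e)}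
        \<partial>PiM I (\<lambda>_. measure_pmf (bernoulli_pmf p)))
        = ennreal (\<Sum>x\<in>F n. p ^ card (fst x) * (1 - p) ^ card (snd x))"
      using FI by (intro expected_occurrences[OF fin _ p]) blast
    also have "\<dots> = ennreal (\<Sum>x\<in>F n. p ^ n * (1 - p) ^ (card \<circ> snd) x)"
      using FI by (intro arg_cong[where f=ennreal] sum.cong) auto
    finally show ?thesis .
  qed
  moreover have "0 \<le> (\<Sum>x\<in>F n. p ^ n * (1 - p) ^ (card \<circ> snd) x)" for n
    using p by (intro sum_nonneg) simp
  ultimately show ?thesis unfolding growth_rate_def eroot_def by simp
qed

lemma continuous_on_01_cong:
  "continuous_on_01 B' \<Longrightarrow> (\<And>p. 0 < p \<Longrightarrow> p < 1 \<Longrightarrow> B p = B' p) \<Longrightarrow> continuous_on_01 B"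
  unfolding continuous_on_01_def by (metis greaterThanLessThan_iff)

lemma power_affine_le_power:
  fixes C :: nat
  assumes "1 \<le> C" "1 \<le> n"
  shows "C ^ (a * n + 1) \<le> (C ^ (a + 1)) ^ n"
proof -
  have "a * n + 1 \<le> (a + 1) * n" using assms(2) by simp
  then have "C ^ (a * n + 1) \<le> C ^ ((a + 1) * n)" using assms(1) by (rule power_increasing)
  then show ?thesis by (simp only: power_mult)
qed

definition bond_interfaces :: "'v set \<Rightarrow> 'v set set \<Rightarrow> 'v set set set \<Rightarrow> 'v \<Rightarrow> nat \<Rightarrow> ('v set set \<times> 'v set set) set" where
  "bond_interfaces V E Pc x0 n = {(P, dP). interface V E Pc x0 P dP \<and> card P = n}"

definition site_interfaces :: "'v set \<Rightarrow> 'v set set \<Rightarrow> 'v set set set \<Rightarrow> 'v \<Rightarrow> nat \<Rightarrow> ('v set \<times> 'v set) set" where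
  "site_interfaces V E Pc x0 n =
     {(\<Union>P, \<Union>dP - \<Union>P) | P dP. site_interface V E Pc x0 P dP \<and> card (\<Union>P) = n}"

lemma B_bond_eq_growth_rate:
  assumes G: "graph V E" and deg: "degree_bounded V E \<Delta>"
    and fin: "\<And>n. finite (bond_interfaces V E Pc x0 n)" and p: "0 \<le> p" "p \<le> 1"
  shows "B_bond V E Pc x0 p = growth_rate (bond_interfaces V E Pc x0) (card \<circ> snd) p"
proof -
  let ?F = "bond_interfaces V E Pc x0"
  have "N_bond V E Pc x0 n = (\<lambda>\<omega>. ecard {x\<in>?F n. (\<forall>e\<in>fst x. \<omega> e) \<and> (\<forall>e\<in>snd x. \<not> \<omega> e)})" for n
    unfolding N_bond_def bond_interfaces_def by (intro ext arg_cong[where f=ecard]) auto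
  moreover have "finite (fst x) \<and> finite (snd x) \<and> fst x \<subseteq> E \<and> snd x \<subseteq> E \<and> fst x \<inter> snd x = {}
      \<and> card (fst x) = n" if x: "x \<in> ?F n" for n x
  proof -
    obtain P dP where "x = (P, dP)" "interface V E Pc x0 P dP" "card P = n"
      using x unfolding bond_interfaces_def by auto
    then show ?thesis using interface_finite_boundary_le[OF G deg] interface_subset by simp
  qed
  ultimately show ?thesis
    unfolding B_bond_def EN_bond_def bond_measure_def
    using limsup_root_expected_occurrences[OF fin] p by simp
qed

lemma site_interface_vertex_sets:
  assumes G: "graph V E" and deg: "degree_bounded V E \<Delta>" and S: "site_interface V E Pc x0 P dP"
  shows "finite (\<Union>P) \<and> finite (\<Union>dP - \<Union>P) \<and> \<Union>P \<subseteq> V \<and> \<Union>dP - \<Union>P \<subseteq> V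
    \<and> card (\<Union>dP - \<Union>P) \<le> 2 * card dP \<and> card P \<le> \<Delta> * card (\<Union>P)"
proof -
  have I: "interface V E Pc x0 P dP" using S unfolding site_interface_def by simp
  note v = interface_card_le_vertices[OF G deg I] interface_boundary_vertices[OF G deg I]
  have "card (\<Union>dP - \<Union>P) \<le> card (\<Union>dP)" using v by (simp add: card_mono)
  then show ?thesis using v by auto
qed

lemma B_site_eq_growth_rate:
  assumes G: "graph V E" and deg: "degree_bounded V E \<Delta>"
    and fin: "\<And>n. finite (site_interfaces V E Pc x0 n)" and p: "0 \<le> p" "p \<le> 1"
  shows "B_site V E Pc x0 p = growth_rate (site_interfaces V E Pc x0) (card \<circ> snd) p"
proof -
  let ?F = "site_interfaces V E Pc x0"
  have N: "N_site V E Pc x0 n = (\<lambda>\<omega>. ecard {x\<in>?F n. (\<forall>v\<in>fst x. \<omega> v) \<and> (\<forall>v\<in>snd x. \<not> \<omega> v)})" for n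
    unfolding N_site_def
  proof (intro ext arg_cong[where f=ecard] set_eqI iffI)
    fix \<omega> x assume "x \<in> {(\<Union>P, \<Union>dP - \<Union>P) | P dP. site_interface V E Pc x0 P dP \<and> card (\<Union>P) = n
        \<and> (\<forall>v\<in>\<Union>P. \<omega> v) \<and> (\<forall>v\<in>\<Union>dP - \<Union>P. \<not> \<omega> v)}"
    then obtain P dP where x: "x = (\<Union>P, \<Union>dP - \<Union>P)" "site_interface V E Pc x0 P dP" "card (\<Union>P) = n"
      "\<forall>v\<in>\<Union>P. \<omega> v" "\<forall>v\<in>\<Union>dP - \<Union>P. \<not> \<omega> v"
      by blast
    then have "x \<in> ?F n" unfolding site_interfaces_def by blast
    then show "x \<in> {x\<in>?F n. (\<forall>v\<in>fst x. \<omega> v) \<and> (\<forall>v\<in>snd x. \<not> \<omega> v)}" using x by simp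
  next
    fix \<omega> x assume x: "x \<in> {x\<in>?F n. (\<forall>v\<in>fst x. \<omega> v) \<and> (\<forall>v\<in>snd x. \<not> \<omega> v)}"
    then obtain P dP where P: "x = (\<Union>P, \<Union>dP - \<Union>P)" "site_interface V E Pc x0 P dP" "card (\<Union>P) = n"
      unfolding site_interfaces_def by blast
    moreover have "\<forall>v\<in>\<Union>P. \<omega> v" "\<forall>v\<in>\<Union>dP - \<Union>P. \<not> \<omega> v" using x P(1) by simp_all
    ultimately show "x \<in> {(\<Union>P, \<Union>dP - \<Union>P) | P dP. site_interface V E Pc x0 P dP \<and> card (\<Union>P) = n
        \<and> (\<forall>v\<in>\<Union>P. \<omega> v) \<and> (\<forall>v\<in>\<Union>dP - \<Union>P. \<not> \<omega> v)}"
      by blast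
  qed
  have FI: "finite (fst x) \<and> finite (snd x) \<and> fst x \<subseteq> V \<and> snd x \<subseteq> V \<and> fst x \<inter> snd x = {}
      \<and> card (fst x) = n" if x: "x \<in> ?F n" for n x
  proof -
    obtain P dP where P: "x = (\<Union>P, \<Union>dP - \<Union>P)" "site_interface V E Pc x0 P dP" "card (\<Union>P) = n"
      using x unfolding site_interfaces_def by blast
    show ?thesis unfolding P(1) fst_conv snd_conv using site_interface_vertex_sets[OF G deg P(2)] P(3) by blast
  qed
  show ?thesis
    unfolding B_site_def EN_site_def site_measure_def N
    by (rule limsup_root_expected_occurrences[OF fin FI]) (use p in auto)
qed

lemma continuous_B_bond:
  assumes G: "graph V E" and deg: "degree_bounded V E \<Delta>" and x0: "x0 \<in> V"
    and anch: "interfaces_anchored V E Pc x0 K"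
  shows "continuous_on_01 (B_bond V E Pc x0)"
proof -
  obtain C :: nat where C: "1 \<le> C" and Ints:
    "\<And>m. finite {(P, dP). interface V E Pc x0 P dP \<and> card P \<le> m}
       \<and> card {(P, dP). interface V E Pc x0 P dP \<and> card P \<le> m} \<le> C ^ (m + 1)"
    by (rule card_anchored_interfaces_le[OF G deg x0 anch]) (rule that)
  let ?F = "bond_interfaces V E Pc x0"
  have sub: "?F n \<subseteq> {(P, dP). interface V E Pc x0 P dP \<and> card P \<le> n}" for n
    unfolding bond_interfaces_def by auto
  have fin: "finite (?F n)" for n using Ints sub finite_subset by blast
  have cnt: "real (card (?F n)) \<le> real (C ^ 2) ^ n" if "1 \<le> n" for n
  proof -
    have "card (?F n) \<le> C ^ (1 * n + 1)" using Ints[of n] card_mono[OF _ sub] by fastforce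
    also have "\<dots> \<le> (C ^ 2) ^ n" using power_affine_le_power[OF C that, of 1] by (simp add: power2_eq_square)
    finally show ?thesis by (metis of_nat_le_iff of_nat_power)
  qed
  have mb: "(card \<circ> snd) x \<le> 3 * \<Delta> * n" if n: "1 \<le> n" and x: "x \<in> ?F n" for n x
  proof -
    obtain P dP where x: "x = (P, dP)" "interface V E Pc x0 P dP" "card P = n"
      using x unfolding bond_interfaces_def by auto
    have "card dP \<le> \<Delta> * (2 * n + 1)" using interface_finite_boundary_le[OF G deg x(2)] x(3) by simp
    also have "\<dots> \<le> 3 * \<Delta> * n" using n by simp
    finally show ?thesis using x(1) by simp
  qed
  have "continuous_on_01 (growth_rate ?F (card \<circ> snd))"
    by (rule continuous_growth_rate[OF _ cnt mb]) simp_all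
  then show ?thesis by (rule continuous_on_01_cong) (auto intro: B_bond_eq_growth_rate[OF G deg fin])
qed

lemma continuous_B_site:
  assumes G: "graph V E" and deg: "degree_bounded V E \<Delta>" and x0: "x0 \<in> V"
    and anch: "interfaces_anchored V E Pc x0 K"
  shows "continuous_on_01 (B_site V E Pc x0)"
proof -
  obtain C :: nat where C: "1 \<le> C" and Ints:
    "\<And>m. finite {(P, dP). interface V E Pc x0 P dP \<and> card P \<le> m}
       \<and> card {(P, dP). interface V E Pc x0 P dP \<and> card P \<le> m} \<le> C ^ (m + 1)"
    by (rule card_anchored_interfaces_le[OF G deg x0 anch]) (rule that)
  let ?F = "site_interfaces V E Pc x0"
  let ?f = "\<lambda>(P::'a set set, dP::'a set set). (\<Union>P, \<Union>dP - \<Union>P)"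
  have sub: "?F n \<subseteq> ?f ` {(P, dP). interface V E Pc x0 P dP \<and> card P \<le> \<Delta> * n}" for n
  proof
    fix x assume "x \<in> ?F n"
    then obtain P dP where x: "x = ?f (P, dP)" "site_interface V E Pc x0 P dP" "card (\<Union>P) = n"
      unfolding site_interfaces_def by auto
    then have "card P \<le> \<Delta> * n" "interface V E Pc x0 P dP"
      using site_interface_vertex_sets[OF G deg x(2)] unfolding site_interface_def by simp_all
    then show "x \<in> ?f ` {(P, dP). interface V E Pc x0 P dP \<and> card P \<le> \<Delta> * n}" using x(1) by force
  qed
  have fin: "finite (?F n)" for n using Ints sub finite_subset by blast
  have cnt: "real (card (?F n)) \<le> real (C ^ (\<Delta> + 1)) ^ n" if "1 \<le> n" for n
  proof -
    have "card (?F n) \<le> C ^ (\<Delta> * n + 1)"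
      using Ints[of "\<Delta> * n"] card_mono[OF _ sub] card_image_le by (metis (no_types, lifting) finite_imageI le_trans)
    also have "\<dots> \<le> (C ^ (\<Delta> + 1)) ^ n" by (rule power_affine_le_power[OF C that])
    finally show ?thesis by (metis of_nat_le_iff of_nat_power)
  qed
  have mb: "(card \<circ> snd) x \<le> (4 * \<Delta> * \<Delta> + 2 * \<Delta>) * n" if n: "1 \<le> n" and x: "x \<in> ?F n" for n x
  proof -
    obtain P dP where x: "x = (\<Union>P, \<Union>dP - \<Union>P)" "site_interface V E Pc x0 P dP" "card (\<Union>P) = n"
      using x unfolding site_interfaces_def by blast
    note Fx = site_interface_vertex_sets[OF G deg x(2)]
    have I: "interface V E Pc x0 P dP" using x(2) unfolding site_interface_def by simp
    have "card (snd x) \<le> 2 * card dP" using Fx x(1) by simp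
    also have "\<dots> \<le> 2 * (\<Delta> * (2 * card P + 1))" using interface_finite_boundary_le[OF G deg I] by simp
    also have "\<dots> \<le> 2 * (\<Delta> * (2 * (\<Delta> * n) + 1))" using Fx x(3) by (intro mult_le_mono2 add_le_mono1) simp
    also have "\<dots> \<le> (4 * \<Delta> * \<Delta> + 2 * \<Delta>) * n" using n by (simp add: algebra_simps)
    finally show ?thesis by simp
  qed
  have "continuous_on_01 (growth_rate ?F (card \<circ> snd))"
    by (rule continuous_growth_rate[OF _ cnt mb]) simp_all
  then show ?thesis by (rule continuous_on_01_cong) (auto intro: B_site_eq_growth_rate[OF G deg fin])
qed

lemma continuous_B_if_anchored:
  assumes "graph V E" "degree_bounded V E \<Delta>" "x0 \<in> V" "interfaces_anchored V E Pc x0 K"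
  shows "continuous_on_01 (B_bond V E Pc x0) \<and> continuous_on_01 (B_site V E Pc x0)"
  using continuous_B_bond[OF assms] continuous_B_site[OF assms] by blast

section \<open>Rays anchor the interfaces\<close>

definition ray_system :: "'v set \<Rightarrow> 'v set set \<Rightarrow> 'v \<Rightarrow> nat \<Rightarrow> nat \<Rightarrow> bool" where
  "ray_system V E x0 L M \<longleftrightarrow> (\<exists>g \<pi> \<sigma>.
     (\<forall>j k. walk V E (\<pi> j k) \<and> hd (\<pi> j k) = g j k \<and> last (\<pi> j k) = g j (Suc k)) \<and>
     (\<forall>j. walk V E (\<sigma> j) \<and> hd (\<sigma> j) = x0 \<and> last (\<sigma> j) = g j 0 \<and> length (\<sigma> j) \<le> L * j + 1) \<and>
     (\<forall>j. inj (g j)) \<and>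
     (\<forall>e. finite {(j, k). e \<in> walk_edges (\<pi> j k)} \<and> card {(j, k). e \<in> walk_edges (\<pi> j k)} \<le> M))"

lemma ray_systemI:
  assumes "\<And>j k. walk V E (\<pi> j k) \<and> hd (\<pi> j k) = g j k \<and> last (\<pi> j k) = g j (Suc k)"
    and "\<And>j. walk V E (\<sigma> j) \<and> hd (\<sigma> j) = x0 \<and> last (\<sigma> j) = g j 0 \<and> length (\<sigma> j) \<le> L * j + 1"
    and "\<And>j. inj (g j)"
    and "\<And>e. finite {(j, k). e \<in> walk_edges (\<pi> j k)} \<and> card {(j, k). e \<in> walk_edges (\<pi> j k)} \<le> M"
  shows "ray_system V E x0 L M"
  unfolding ray_system_def
  by (rule exI[of _ g], rule exI[of _ \<pi>], rule exI[of _ \<sigma>]) (use assms in blast)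

lemma ray_crosses_cut:
  assumes fin: "finite (comp V (E - F) x0)" and g0: "g 0 \<in> comp V (E - F) x0" and inj: "inj g"
    and \<pi>: "\<And>k. walk V E (\<pi> k) \<and> hd (\<pi> k) = g k \<and> last (\<pi> k) = g (Suc k)"
  shows "\<exists>k. walk_edges (\<pi> k) \<inter> F \<noteq> {}"
proof (rule ccontr)
  assume "\<not> (\<exists>k. walk_edges (\<pi> k) \<inter> F \<noteq> {})"
  then have w: "walk V (E - F) (\<pi> k)" for k using \<pi>[of k] unfolding walk_def by blast
  have "g k \<in> comp V (E - F) x0" for k
  proof (induction k)
    case (Suc k)
    then have "set (\<pi> k) \<subseteq> comp V (E - F) x0" using walk_subset_comp[OF w] \<pi>[of k] by simp
    moreover have "last (\<pi> k) \<in> set (\<pi> k)" using w[of k] unfolding walk_def by simp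
    ultimately show ?case using \<pi>[of k] by auto
  qed (rule g0)
  then have "finite (range g)" using finite_subset[OF _ fin] by blast
  then have "finite (UNIV :: nat set)" using finite_imageD[OF _ inj] by blast
  then show False by simp
qed

lemma short_walk_in_comp:
  assumes far: "\<not> (\<exists>y\<in>\<Union>F. \<exists>w. walk V E w \<and> hd w = x0 \<and> last w = y \<and> length w \<le> R)"
    and w: "walk V E w" "hd w = x0" "length w \<le> R"
  shows "last w \<in> comp V (E - F) x0"
proof -
  have notF: "v \<notin> \<Union>F" if v: "v \<in> set w" for v
  proof
    assume "v \<in> \<Union>F"
    obtain as bs where ws: "w = (as @ [v]) @ bs" using split_list[OF v] by auto
    then have "walk V E (as @ [v]) \<and> hd (as @ [v]) = x0 \<and> last (as @ [v]) = v \<and> length (as @ [v]) \<le> R"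
      using walk_prefix[of V E "as @ [v]" bs] w by (auto simp: hd_append)
    then have "\<exists>y\<in>\<Union>F. \<exists>w. walk V E w \<and> hd w = x0 \<and> last w = y \<and> length w \<le> R"
      using \<open>v \<in> \<Union>F\<close> by (intro bexI[where x=v] exI[where x="as @ [v]"])
    with far show False by contradiction
  qed
  have "walk_edges w \<subseteq> E - F"
  proof
    fix e assume e: "e \<in> walk_edges w"
    then obtain as a b bs where "w = as @ a # b # bs" "e = {a, b}" by (rule walk_edgesE)
    then have "a \<notin> \<Union>F" using notF[of a] by simp
    moreover have "e \<in> E" using e w(1) unfolding walk_def by blast
    ultimately show "e \<in> E - F" using \<open>e = {a, b}\<close> by blast
  qed
  then have "walk V (E - F) w" using w(1) unfolding walk_def by blast
  then show ?thesis unfolding comp_iff_walk using w(2) by blast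
qed

text \<open>If no vertex of \<open>\<partial>P\<close> were that close to \<open>x0\<close>, the first \<open>M |\<partial>P| + 1\<close> rays would all
  start in the finite component of \<open>x0\<close> in \<open>G - \<partial>P\<close>, so each of them would cross \<open>\<partial>P\<close>; but
  each edge of \<open>\<partial>P\<close> is crossed by at most \<open>M\<close> rays.\<close>
lemma ray_system_imp_anchored:
  assumes G: "graph V E" and deg: "degree_bounded V E \<Delta>" and rays: "ray_system V E x0 L M"
  shows "interfaces_anchored V E Pc x0 (L * M)"
  unfolding interfaces_anchored_def
proof (intro allI impI)
  fix P dP assume I: "interface V E Pc x0 P dP"
  obtain g \<pi> \<sigma> where \<pi>: "\<And>j k. walk V E (\<pi> j k) \<and> hd (\<pi> j k) = g j k \<and> last (\<pi> j k) = g j (Suc k)"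
    and \<sigma>: "\<And>j. walk V E (\<sigma> j) \<and> hd (\<sigma> j) = x0 \<and> last (\<sigma> j) = g j 0 \<and> length (\<sigma> j) \<le> L * j + 1"
    and inj: "\<And>j. inj (g j)"
    and mult: "\<And>e. finite {(j, k). e \<in> walk_edges (\<pi> j k)} \<and> card {(j, k). e \<in> walk_edges (\<pi> j k)} \<le> M"
    using rays unfolding ray_system_def by blast
  have finC: "finite (comp V (E - dP) x0)" using I unfolding interface_def by blast
  have finDP: "finite dP" using interface_finite_boundary_le[OF G deg I] by simp
  define J where "J = M * card dP"
  let ?S = "\<lambda>e. fst ` {(j, k). e \<in> walk_edges (\<pi> j k)}"
  have S: "finite (?S e) \<and> card (?S e) \<le> M" for e
    using mult[of e] card_image_le[of "{(j, k). e \<in> walk_edges (\<pi> j k)}" fst] by simp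
  show "\<exists>y\<in>\<Union>dP. \<exists>w. walk V E w \<and> hd w = x0 \<and> last w = y \<and> length w \<le> L * M * card dP + 1"
  proof (rule ccontr)
    assume far: "\<not> (\<exists>y\<in>\<Union>dP. \<exists>w. walk V E w \<and> hd w = x0 \<and> last w = y \<and> length w \<le> L * M * card dP + 1)"
    have sub: "{0..J} \<subseteq> (\<Union>e\<in>dP. ?S e)"
    proof
      fix j assume "j \<in> {0..J}"
      then have "L * j \<le> L * M * card dP" by (simp add: J_def mult.assoc)
      then have "length (\<sigma> j) \<le> L * M * card dP + 1" using \<sigma>[of j] by linarith
      then have "g j 0 \<in> comp V (E - dP) x0" using short_walk_in_comp[OF far, of "\<sigma> j"] \<sigma>[of j] by simp
      then obtain k where "walk_edges (\<pi> j k) \<inter> dP \<noteq> {}" using ray_crosses_cut[OF finC _ inj \<pi>] by blast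
      then show "j \<in> (\<Union>e\<in>dP. ?S e)" by force
    qed
    have "card {0..J} \<le> card (\<Union>e\<in>dP. ?S e)" using S finDP by (intro card_mono[OF _ sub]) simp
    also have "\<dots> \<le> (\<Sum>e\<in>dP. card (?S e))" by (rule card_UN_le[OF finDP])
    also have "\<dots> \<le> (\<Sum>e\<in>dP. M)" using S by (intro sum_mono) blast
    also have "\<dots> = J" by (simp add: J_def)
    finally show False by simp
  qed
qed

section \<open>The lattices of the class S\<close>

lemma ray_system_mono:
  assumes "ray_system V E x0 L M" "E \<subseteq> E'"
  shows "ray_system V E' x0 L M"
proof -
  obtain g \<pi> \<sigma> where
    "\<forall>j k. walk V E (\<pi> j k) \<and> hd (\<pi> j k) = g j k \<and> last (\<pi> j k) = g j (Suc k)"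
    "\<forall>j. walk V E (\<sigma> j) \<and> hd (\<sigma> j) = x0 \<and> last (\<sigma> j) = g j 0 \<and> length (\<sigma> j) \<le> L * j + 1"
    "\<forall>j. inj (g j)"
    "\<forall>e. finite {(j, k). e \<in> walk_edges (\<pi> j k)} \<and> card {(j, k). e \<in> walk_edges (\<pi> j k)} \<le> M"
    using assms(1) unfolding ray_system_def by blast
  then show ?thesis by (intro ray_systemI[where \<pi>=\<pi> and g=g and \<sigma>=\<sigma>]) (use walk_mono[OF _ assms(2)] in blast)+
qed

lemma continuous_B_if_ray_system:
  assumes "graph V E" "degree_bounded V E \<Delta>" "x0 \<in> V" "ray_system V E x0 L M"
  shows "continuous_on_01 (B_bond V E Pc x0) \<and> continuous_on_01 (B_site V E Pc x0)"
  using continuous_B_if_anchored[OF assms(1-3) ray_system_imp_anchored[OF assms(1,2,4)]] .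

lemma addv_unitv_mem: "x \<in> Zd_V d \<Longrightarrow> i < d \<Longrightarrow> addv x (unitv i) \<in> Zd_V d"
  unfolding Zd_V_def addv_def unitv_def by auto

lemma Zd_edgeI: "x \<in> Zd_V d \<Longrightarrow> i < d \<Longrightarrow> {x, addv x (unitv i)} \<in> Zd_E d"
  unfolding Zd_E_def by blast

lemma addv_unitv_neq: "x \<noteq> addv x (unitv i)"
proof
  assume "x = addv x (unitv i)"
  then have "x i = addv x (unitv i) i" by simp
  then show False by (simp add: addv_def unitv_def)
qed

lemma addv2_unitv_neq: "x \<noteq> addv (addv x (unitv i)) (unitv j)"
proof
  assume "x = addv (addv x (unitv i)) (unitv j)"
  then have "x i = addv (addv x (unitv i)) (unitv j) i" by simp
  then show False by (simp add: addv_def unitv_def split: if_splits)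
qed

lemma graph_Zd: "graph (Zd_V d) (Zd_E d)"
  unfolding graph_def Zd_E_def using addv_unitv_neq addv_unitv_mem by blast

lemma Zd_E_subset_Td_E: "Zd_E d \<subseteq> Td_E d"
  unfolding Td_E_def by blast

lemma graph_Td: "graph (Zd_V d) (Td_E d)"
  unfolding graph_def
proof
  fix e assume e: "e \<in> Td_E d"
  show "\<exists>u v. u \<noteq> v \<and> u \<in> Zd_V d \<and> v \<in> Zd_V d \<and> e = {u, v}"
  proof (cases "e \<in> Zd_E d")
    case True
    then show ?thesis using graph_Zd unfolding graph_def by blast
  next
    case False
    then obtain x i j where x: "e = {x, addv (addv x (unitv i)) (unitv j)}" "x \<in> Zd_V d" "i < j" "j < d"
      using e unfolding Td_E_def by blast
    then have "addv (addv x (unitv i)) (unitv j) \<in> Zd_V d" using addv_unitv_mem by simp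
    then show ?thesis using x addv2_unitv_neq by blast
  qed
qed

lemma degree_bounded_Zd: "degree_bounded (Zd_V d) (Zd_E d) (2 * d)"
  unfolding degree_bounded_def
proof
  fix v :: "nat \<Rightarrow> int"
  let ?f = "\<lambda>(i, b). if b then {v, addv v (unitv i)} else {\<lambda>k. v k - unitv i k, v}"
  have sub: "{e\<in>Zd_E d. v \<in> e} \<subseteq> ?f ` ({0..<d} \<times> UNIV)"
  proof
    fix e assume "e \<in> {e\<in>Zd_E d. v \<in> e}"
    then obtain x i where x: "e = {x, addv x (unitv i)}" "i < d" "v \<in> e" unfolding Zd_E_def by blast
    show "e \<in> ?f ` ({0..<d} \<times> UNIV)"
    proof (cases "v = x")
      case True
      then show ?thesis using x by force
    next
      case False
      then have "v = addv x (unitv i)" using x by blast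
      then have "x = (\<lambda>k. v k - unitv i k)" by (simp add: fun_eq_iff addv_def)
      then have "e = ?f (i, False)" using x \<open>v = addv x (unitv i)\<close> by auto
      then show ?thesis using x(2) by force
    qed
  qed
  have "card (?f ` ({0..<d} \<times> UNIV)) \<le> 2 * d"
    using card_image_le[of "{0..<d} \<times> (UNIV :: bool set)" ?f] by (simp add: card_cartesian_product)
  then show "finite {e\<in>Zd_E d. v \<in> e} \<and> card {e\<in>Zd_E d. v \<in> e} \<le> 2 * d"
    using card_mono[OF _ sub] finite_subset[OF sub] by fastforce
qed

lemma degree_bounded_Td: "degree_bounded (Zd_V d) (Td_E d) (2 * d + 2 * d * d)"
  unfolding degree_bounded_def
proof
  fix v :: "nat \<Rightarrow> int" assume v: "v \<in> Zd_V d"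
  let ?f = "\<lambda>(i, j, b). if b then {v, addv (addv v (unitv i)) (unitv j)}
    else {\<lambda>k. v k - unitv j k - unitv i k, v}"
  let ?A = "{0..<d} \<times> {0..<d} \<times> (UNIV :: bool set)"
  have sub: "{e\<in>Td_E d. v \<in> e} \<subseteq> {e\<in>Zd_E d. v \<in> e} \<union> ?f ` ?A"
  proof
    fix e assume e: "e \<in> {e\<in>Td_E d. v \<in> e}"
    show "e \<in> {e\<in>Zd_E d. v \<in> e} \<union> ?f ` ?A"
    proof (cases "e \<in> Zd_E d")
      case False
      then obtain x i j where x: "e = {x, addv (addv x (unitv i)) (unitv j)}" "i < j" "j < d" "v \<in> e"
        using e unfolding Td_E_def by blast
      show ?thesis
      proof (cases "v = x")
        case True
        then show ?thesis using x by force
      next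
        case False
        then have v: "v = addv (addv x (unitv i)) (unitv j)" using x by blast
        then have "x = (\<lambda>k. v k - unitv j k - unitv i k)" by (simp add: fun_eq_iff addv_def)
        then have "e = ?f (i, j, False)" using x v by auto
        then show ?thesis using x(2,3) by force
      qed
    qed (use e in blast)
  qed
  have "card (?f ` ?A) \<le> 2 * d * d"
    using card_image_le[of ?A ?f] by (simp add: card_cartesian_product)
  moreover have "finite {e\<in>Zd_E d. v \<in> e}" "card {e\<in>Zd_E d. v \<in> e} \<le> 2 * d"
    using degree_boundedD[OF degree_bounded_Zd v] by auto
  moreover have "card ({e\<in>Zd_E d. v \<in> e} \<union> ?f ` ?A) \<le> card {e\<in>Zd_E d. v \<in> e} + card (?f ` ?A)"
    by (rule card_Un_le)
  ultimately show "finite {e\<in>Td_E d. v \<in> e} \<and> card {e\<in>Td_E d. v \<in> e} \<le> 2 * d + 2 * d * d"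
    using card_mono[OF _ sub] finite_subset[OF sub] by fastforce
qed

definition zd_grid :: "(nat \<Rightarrow> int) \<Rightarrow> nat \<Rightarrow> nat \<Rightarrow> nat \<Rightarrow> int" where
  "zd_grid x0 j k = (\<lambda>t. x0 t + (if t = 0 then int k else 0) + (if t = 1 then int j else 0))"

lemma zd_grid_mem: "x0 \<in> Zd_V d \<Longrightarrow> 2 \<le> d \<Longrightarrow> zd_grid x0 j k \<in> Zd_V d"
  unfolding Zd_V_def zd_grid_def by auto

lemma zd_grid_Suc_k: "zd_grid x0 j (Suc k) = addv (zd_grid x0 j k) (unitv 0)"
  by (rule ext) (simp add: zd_grid_def addv_def unitv_def)

lemma zd_grid_Suc_j: "zd_grid x0 (Suc j) 0 = addv (zd_grid x0 j 0) (unitv 1)"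
  by (rule ext) (simp add: zd_grid_def addv_def unitv_def)

lemma zd_grid_eq_iff: "zd_grid x0 j k = zd_grid x0 j' k' \<longleftrightarrow> j = j' \<and> k = k'"
proof
  assume h: "zd_grid x0 j k = zd_grid x0 j' k'"
  have "zd_grid x0 j k 0 = zd_grid x0 j' k' 0" "zd_grid x0 j k 1 = zd_grid x0 j' k' 1" using h by simp_all
  then show "j = j' \<and> k = k'" unfolding zd_grid_def by simp
qed simp

fun zd_spine :: "(nat \<Rightarrow> int) \<Rightarrow> nat \<Rightarrow> (nat \<Rightarrow> int) list" where
  "zd_spine x0 0 = [x0]"
| "zd_spine x0 (Suc j) = zd_spine x0 j @ [zd_grid x0 (Suc j) 0]"

lemma zd_spine_walk:
  assumes x0: "x0 \<in> Zd_V d" and d: "2 \<le> d"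
  shows "walk (Zd_V d) (Zd_E d) (zd_spine x0 j) \<and> hd (zd_spine x0 j) = x0
    \<and> last (zd_spine x0 j) = zd_grid x0 j 0 \<and> length (zd_spine x0 j) = Suc j"
proof (induction j)
  case 0
  have "zd_grid x0 0 0 = x0" by (rule ext) (simp add: zd_grid_def)
  then show ?case using x0 by simp
next
  case (Suc j)
  have ne: "zd_spine x0 j \<noteq> []" using Suc.IH by (auto simp: walk_def)
  have "{zd_grid x0 j 0, zd_grid x0 (Suc j) 0} \<in> Zd_E d"
    unfolding zd_grid_Suc_j using zd_grid_mem[OF x0 d] d by (intro Zd_edgeI) simp_all
  then have "walk (Zd_V d) (Zd_E d) (zd_spine x0 (Suc j))"
    using Suc.IH ne zd_grid_mem[OF x0 d] by (simp add: walk_def walk_edges_snoc)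
  then show ?case using Suc.IH ne by simp
qed

lemma ray_system_Zd:
  assumes d: "2 \<le> d" and x0: "x0 \<in> Zd_V d"
  shows "ray_system (Zd_V d) (Zd_E d) x0 1 1"
proof -
  let ?g = "zd_grid x0" and ?\<pi> = "\<lambda>j k. [zd_grid x0 j k, zd_grid x0 j (Suc k)]"
  have \<pi>: "\<forall>j k. walk (Zd_V d) (Zd_E d) (?\<pi> j k) \<and> hd (?\<pi> j k) = ?g j k \<and> last (?\<pi> j k) = ?g j (Suc k)"
  proof (intro allI)
    fix j k
    have "{zd_grid x0 j k, zd_grid x0 j (Suc k)} \<in> Zd_E d"
      unfolding zd_grid_Suc_k using zd_grid_mem[OF x0 d] d by (intro Zd_edgeI) simp_all
    then show "walk (Zd_V d) (Zd_E d) (?\<pi> j k) \<and> hd (?\<pi> j k) = ?g j k \<and> last (?\<pi> j k) = ?g j (Suc k)"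
      using zd_grid_mem[OF x0 d] unfolding walk_def by simp
  qed
  have \<sigma>: "\<forall>j. walk (Zd_V d) (Zd_E d) (zd_spine x0 j) \<and> hd (zd_spine x0 j) = x0
    \<and> last (zd_spine x0 j) = ?g j 0 \<and> length (zd_spine x0 j) \<le> 1 * j + 1"
    using zd_spine_walk[OF x0 d] by simp
  have inj: "\<forall>j. inj (?g j)" unfolding inj_def zd_grid_eq_iff by simp
  have mult: "finite {(j, k). e \<in> walk_edges (?\<pi> j k)} \<and> card {(j, k). e \<in> walk_edges (?\<pi> j k)} \<le> 1" for e
  proof (cases "{(j, k). e \<in> walk_edges (?\<pi> j k)} = {}")
    case False
    then obtain a where a: "a \<in> {(j, k). e \<in> walk_edges (?\<pi> j k)}" by blast
    have "b = a" if "b \<in> {(j, k). e \<in> walk_edges (?\<pi> j k)}" for b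
      using a that by (cases a; cases b) (auto simp: doubleton_eq_iff zd_grid_eq_iff)
    then have "{(j, k). e \<in> walk_edges (?\<pi> j k)} = {a}" using a by blast
    then show ?thesis by simp
  qed simp
  show ?thesis by (rule ray_systemI[where \<pi>="?\<pi>" and g="?g" and \<sigma>="zd_spine x0"]) (use \<pi> \<sigma> inj mult in blast)+
qed

definition translation_closed :: "'a::ab_group_add set \<Rightarrow> 'a set set \<Rightarrow> 'a \<Rightarrow> bool" where
  "translation_closed V E t \<longleftrightarrow> (\<forall>v\<in>V. v + t \<in> V) \<and> (\<forall>e\<in>E. (\<lambda>z. z + t) ` e \<in> E)"

lemma translation_closed_add:
  assumes "translation_closed V E s" "translation_closed V E t"
  shows "translation_closed V E (s + t)"
proof -
  have "(\<lambda>z. z + (s + t)) ` e = (\<lambda>z. z + t) ` ((\<lambda>z. z + s) ` e)" for e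
    by (simp add: image_image add.assoc)
  then show ?thesis using assms unfolding translation_closed_def by (simp add: add.assoc[symmetric])
qed

lemma translation_closed_of_nat_mult:
  fixes c :: "'a::ring_1"
  assumes "translation_closed V E c"
  shows "translation_closed V E (of_nat n * c)"
proof (induction n)
  case 0
  then show ?case by (simp add: translation_closed_def)
next
  case (Suc n)
  then show ?case using translation_closed_add[OF Suc assms] by (simp add: algebra_simps)
qed

lemma translation_closed_of_int_mult:
  fixes c :: "'a::ring_1"
  assumes "translation_closed V E c" "translation_closed V E (- c)"
  shows "translation_closed V E (of_int m * c)"
proof (cases "m \<ge> 0")
  case True
  then show ?thesis using translation_closed_of_nat_mult[OF assms(1), of "nat m"] by simp
next
  case False
  then show ?thesis using translation_closed_of_nat_mult[OF assms(2), of "nat (- m)"] by simp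
qed

lemma translation_closed_if_invariant:
  assumes V: "translate c ` V = V" and E: "(\<lambda>e. translate c ` e) ` E = E"
  shows "translation_closed V E c \<and> translation_closed V E (- c)"
proof -
  have "v + c \<in> V" if "v \<in> V" for v using V that unfolding translate_def by blast
  moreover have "(\<lambda>z. z + c) ` e \<in> E" if "e \<in> E" for e
    using E that unfolding translate_def by blast
  moreover have "v + - c \<in> V" if "v \<in> V" for v
  proof -
    have "v \<in> translate c ` V" using V that by simp
    then obtain u where "u \<in> V" "v = u + c" unfolding translate_def by blast
    then show ?thesis by simp
  qed
  moreover have "(\<lambda>z. z + - c) ` e \<in> E" if "e \<in> E" for e
  proof -
    obtain e' where "e' \<in> E" "e = translate c ` e'" using E \<open>e \<in> E\<close> by blast
    then show ?thesis unfolding translate_def by (simp add: image_image)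
  qed
  ultimately show ?thesis unfolding translation_closed_def by blast
qed

lemma walk_translate: "translation_closed V E t \<Longrightarrow> walk V E w \<Longrightarrow> walk V E (map (\<lambda>z. z + t) w)"
  unfolding walk_def translation_closed_def walk_edges_map by auto

lemma planar_lattice_translations:
  assumes "planar_lattice V E Pc"
  obtains a b S where "independent {a, b}" "a \<noteq> b"
    "\<And>m n :: int. translation_closed V E (of_int m * a + of_int n * b)"
    "finite S" "S \<subseteq> V" "\<forall>v\<in>V. \<exists>u\<in>S. \<exists>m n :: int. v = u + of_int m * a + of_int n * b"
proof -
  obtain \<gamma> :: "complex set \<Rightarrow> real \<Rightarrow> complex" and a b S where ab: "independent {a, b}" "a \<noteq> b"
    and T: "\<forall>t\<in>{a, b}. translate t ` V = V \<and> (\<lambda>e. translate t ` e) ` E = E \<and>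
               (\<forall>e\<in>E. path_image (\<gamma> (translate t ` e)) = translate t ` path_image (\<gamma> e))"
    and S: "finite S" "S \<subseteq> V" "\<forall>v\<in>V. \<exists>u\<in>S. \<exists>m n :: int. v = u + of_int m * a + of_int n * b"
    using assms unfolding planar_lattice_def by (elim conjE exE) (rule that)
  have A: "translation_closed V E a \<and> translation_closed V E (- a)"
    using T by (intro translation_closed_if_invariant) simp_all
  have B: "translation_closed V E b \<and> translation_closed V E (- b)"
    using T by (intro translation_closed_if_invariant) simp_all
  have TC: "translation_closed V E (of_int m * a + of_int n * b)" for m n :: int
    using A B by (intro translation_closed_add translation_closed_of_int_mult) simp_all
  show ?thesis by (rule that[OF ab TC S])
qed

lemma degree_bounded_if_translates:
  fixes V :: "'a::ab_group_add set"
  assumes lf: "locally_finite V E" and S: "finite S" "S \<subseteq> V"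
    and cover: "\<And>v. v \<in> V \<Longrightarrow> \<exists>u\<in>S. \<exists>t. v = u + t \<and> translation_closed V E (- t)"
  shows "degree_bounded V E (\<Sum>u\<in>S. card {e\<in>E. u \<in> e})"
  unfolding degree_bounded_def
proof
  fix v assume "v \<in> V"
  then obtain u t where u: "u \<in> S" "v = u + t" and t: "translation_closed V E (- t)"
    using cover by blast
  have fu: "finite {e\<in>E. u \<in> e}" using lf u(1) S(2) unfolding locally_finite_def by blast
  have sub: "{e\<in>E. v \<in> e} \<subseteq> (\<lambda>e. (\<lambda>z. z + t) ` e) ` {e\<in>E. u \<in> e}"
  proof
    fix e assume e: "e \<in> {e\<in>E. v \<in> e}"
    let ?e' = "(\<lambda>z. z + - t) ` e"
    have "?e' \<in> E" "u \<in> ?e'" using t e u(2) unfolding translation_closed_def by force+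
    moreover have "e = (\<lambda>z. z + t) ` ?e'" by (simp add: image_image)
    ultimately show "e \<in> (\<lambda>e. (\<lambda>z. z + t) ` e) ` {e\<in>E. u \<in> e}" by blast
  qed
  have "card {e\<in>E. v \<in> e} \<le> card {e\<in>E. u \<in> e}"
    using card_mono[OF finite_imageI[OF fu] sub] card_image_le[OF fu] by (rule le_trans)
  also have "\<dots> \<le> (\<Sum>u\<in>S. card {e\<in>E. u \<in> e})" by (rule member_le_sum[OF u(1) _ S(1)]) simp
  finally show "finite {e\<in>E. v \<in> e} \<and> card {e\<in>E. v \<in> e} \<le> (\<Sum>u\<in>S. card {e\<in>E. u \<in> e})"
    using finite_subset[OF sub finite_imageI[OF fu]] by simp
qed

text \<open>If \<open>e\<close> lies on the translate of \<open>w\<close> by \<open>t i\<close>, then \<open>t i\<close> is the difference of a vertex of \<open>e\<close>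
  and a vertex of \<open>w\<close>.\<close>
lemma card_translates_through_edge_le:
  fixes w :: "'a::ab_group_add list" and t :: "'i \<Rightarrow> 'a"
  assumes inj: "inj t"
  shows "finite {i. e \<in> walk_edges (map (\<lambda>z. z + t i) w)}
    \<and> card {i. e \<in> walk_edges (map (\<lambda>z. z + t i) w)} \<le> 2 * length w"
proof (cases "{i. e \<in> walk_edges (map (\<lambda>z. z + t i) w)} = {}")
  case False
  let ?I = "{i. e \<in> walk_edges (map (\<lambda>z. z + t i) w)}"
  let ?T = "(\<lambda>(u, v). u - v) ` (e \<times> set w)"
  have edge: "\<exists>x\<in>set w. x + t i \<in> e" if i: "i \<in> ?I" for i
  proof -
    obtain f where "f \<in> walk_edges w" "e = (\<lambda>z. z + t i) ` f"
      using i unfolding walk_edges_map by blast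
    moreover obtain as x y bs where "w = as @ x # y # bs" "f = {x, y}"
      using \<open>f \<in> walk_edges w\<close> by (rule walk_edgesE)
    ultimately show ?thesis by auto
  qed
  obtain i0 where "i0 \<in> ?I" using False by blast
  then obtain f where "f \<in> walk_edges w" "e = (\<lambda>z. z + t i0) ` f"
    unfolding walk_edges_map by blast
  moreover obtain as x y bs where "w = as @ x # y # bs" "f = {x, y}"
    using \<open>f \<in> walk_edges w\<close> by (rule walk_edgesE)
  ultimately have "e = {x + t i0, y + t i0}" by simp
  then have e: "finite e" "card e \<le> 2" by (auto simp: card_insert_if)
  have "t ` ?I \<subseteq> ?T"
  proof
    fix s assume "s \<in> t ` ?I"
    then obtain i where "i \<in> ?I" "s = t i" by blast
    then obtain x where "x \<in> set w" "x + t i \<in> e" using edge by blast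
    then show "s \<in> ?T" using \<open>s = t i\<close> by force
  qed
  moreover have "card ?T \<le> 2 * length w"
  proof -
    have "card ?T \<le> card e * card (set w)" using card_image_le[of "e \<times> set w"] e(1)
      by (simp add: card_cartesian_product)
    also have "\<dots> \<le> 2 * length w" using e(2) card_length[of w] by (rule mult_le_mono)
    finally show ?thesis .
  qed
  moreover have "finite ?T" using e(1) by simp
  moreover have inj_I: "inj_on t ?I" using inj by (rule inj_on_subset) simp
  ultimately have "finite ?I" "card ?I \<le> card ?T"
    using finite_imageD[OF finite_subset] card_mono card_image[OF inj_I] by metis+
  then show ?thesis using \<open>card ?T \<le> 2 * length w\<close> by simp
qed simp

fun iterated_walk :: "'a::ring_1 list \<Rightarrow> 'a \<Rightarrow> nat \<Rightarrow> 'a list" where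
  "iterated_walk w b 0 = [hd w]"
| "iterated_walk w b (Suc j) = iterated_walk w b j @ tl (map (\<lambda>z. z + of_nat j * b) w)"

lemma iterated_walk:
  assumes tb: "\<And>j. translation_closed V E (of_nat j * b)"
    and w: "walk V E w" "last w = hd w + b"
  shows "walk V E (iterated_walk w b j) \<and> hd (iterated_walk w b j) = hd w
    \<and> last (iterated_walk w b j) = hd w + of_nat j * b \<and> length (iterated_walk w b j) \<le> length w * j + 1"
proof (induction j)
  case 0
  then show ?case using walk_hd_in[OF w(1)] by simp
next
  case (Suc j)
  let ?ys = "map (\<lambda>z. z + of_nat j * b) w"
  have ne: "w \<noteq> []" using w(1) unfolding walk_def by simp
  have wy: "walk V E ?ys" by (rule walk_translate[OF tb w(1)])
  have "hd ?ys = last (iterated_walk w b j)" using ne Suc.IH by (simp add: hd_map)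
  moreover have "last ?ys = hd w + of_nat (Suc j) * b" using ne w(2) by (simp add: last_map algebra_simps)
  moreover have "length (iterated_walk w b (Suc j)) \<le> length w * Suc j + 1"
    using Suc.IH ne by (cases w) auto
  ultimately show ?case using walk_append[of V E "iterated_walk w b j" ?ys] Suc.IH wy by simp
qed

lemma independent_pair_coeffs:
  fixes a b :: complex
  assumes "independent {a, b}" "a \<noteq> b" "r *\<^sub>R a + s *\<^sub>R b = 0"
  shows "r = 0 \<and> s = 0"
proof -
  have ab: "a \<notin> span {b}" "b \<noteq> 0" using assms(1,2) by (simp_all add: independent_insert)
  have "r = 0"
  proof (rule ccontr)
    assume "r \<noteq> 0"
    have "r *\<^sub>R a = - (s *\<^sub>R b)" using assms(3) by (simp add: eq_neg_iff_add_eq_0)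
    then have "inverse r *\<^sub>R (r *\<^sub>R a) = inverse r *\<^sub>R (- (s *\<^sub>R b))" by simp
    then have "a = (- (inverse r * s)) *\<^sub>R b" using \<open>r \<noteq> 0\<close> by simp
    moreover have "(- (inverse r * s)) *\<^sub>R b \<in> span {b}" by (rule span_scale[OF span_base]) simp
    ultimately show False using ab(1) by simp
  qed
  then show ?thesis using assms(3) ab(2) by simp
qed

lemma inj_lattice_coordinates:
  fixes a b :: complex
  assumes "independent {a, b}" "a \<noteq> b"
  shows "inj (\<lambda>(j, k). of_nat j * b + of_nat k * a)"
proof (rule injI)
  fix p p' :: "nat \<times> nat"
  assume "(\<lambda>(j, k). of_nat j * b + of_nat k * a) p = (\<lambda>(j, k). of_nat j * b + of_nat k * a) p'"
  then have "(real (snd p') - real (snd p)) *\<^sub>R a + (real (fst p') - real (fst p)) *\<^sub>R b = 0"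
    by (cases p; cases p') (simp add: scaleR_conv_of_real algebra_simps)
  then have "real (snd p') - real (snd p) = 0 \<and> real (fst p') - real (fst p) = 0"
    by (rule independent_pair_coeffs[OF assms])
  then show "p = p'" by (simp add: prod_eq_iff)
qed

lemma ray_system_of_translations:
  fixes a b :: "'a::ring_1"
  defines "t \<equiv> \<lambda>(j, k). of_nat j * b + of_nat k * a"
  assumes Tt: "\<And>i. translation_closed V E (t i)" and inj: "inj t"
    and pa: "walk V E pa" "hd pa = x0" "last pa = x0 + a"
    and pb: "walk V E pb" "hd pb = x0" "last pb = x0 + b"
  shows "ray_system V E x0 (length pb) (2 * length pa)"
proof -
  define g where "g j k = x0 + t (j, k)" for j k
  define \<pi> where "\<pi> j k = map (\<lambda>z. z + t (j, k)) pa" for j k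
  show ?thesis
  proof (rule ray_systemI[where \<pi>=\<pi> and g=g and \<sigma>="iterated_walk pb b"])
    fix j k
    have "pa \<noteq> []" using pa(1) unfolding walk_def by simp
    then show "walk V E (\<pi> j k) \<and> hd (\<pi> j k) = g j k \<and> last (\<pi> j k) = g j (Suc k)"
      using walk_translate[OF Tt[of "(j, k)"] pa(1)] pa(2,3)
      by (simp add: \<pi>_def g_def t_def hd_map last_map algebra_simps)
    have "translation_closed V E (of_nat j * b)" for j using Tt[of "(j, 0)"] by (simp add: t_def)
    then show "walk V E (iterated_walk pb b j) \<and> hd (iterated_walk pb b j) = x0
      \<and> last (iterated_walk pb b j) = g j 0 \<and> length (iterated_walk pb b j) \<le> length pb * j + 1"
      using iterated_walk[of V E b pb j] pb by (simp add: g_def t_def)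
    show "inj (g j)"
    proof (rule injI)
      fix k k' assume "g j k = g j k'"
      then have "t (j, k) = t (j, k')" unfolding g_def by simp
      then show "k = k'" using inj unfolding inj_def by blast
    qed
  next
    fix e
    have "{(j, k). e \<in> walk_edges (\<pi> j k)} = {i. e \<in> walk_edges (map (\<lambda>z. z + t i) pa)}"
      unfolding \<pi>_def by auto
    then show "finite {(j, k). e \<in> walk_edges (\<pi> j k)} \<and> card {(j, k). e \<in> walk_edges (\<pi> j k)} \<le> 2 * length pa"
      using card_translates_through_edge_le[OF inj, of e pa] by simp
  qed
qed

lemma planar_lattice_ray_system:
  assumes pl: "planar_lattice V E Pc" and x0: "x0 \<in> V"
  shows "\<exists>L M. ray_system V E x0 L M"
proof -
  obtain a b where ab: "independent {a, b}" "a \<noteq> b"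
    and TC: "\<And>m n :: int. translation_closed V E (of_int m * a + of_int n * b)"
    by (rule planar_lattice_translations[OF pl]) (rule that)
  have Tt: "translation_closed V E ((\<lambda>(j, k). of_nat j * b + of_nat k * a) i)" for i
    using TC[of "int (snd i)" "int (fst i)"] by (simp add: case_prod_beta add.commute)
  have "connected_graph V E" using pl unfolding planar_lattice_def by (elim conjE)
  then have "comp V E x0 = V" using x0 unfolding connected_graph_def by blast
  moreover have "x0 + a \<in> V" "x0 + b \<in> V"
    using TC[of 1 0] TC[of 0 1] x0 unfolding translation_closed_def by simp_all
  ultimately have "x0 + a \<in> comp V E x0" "x0 + b \<in> comp V E x0" by simp_all
  then obtain pa pb where pa: "walk V E pa" "hd pa = x0" "last pa = x0 + a"
    and pb: "walk V E pb" "hd pb = x0" "last pb = x0 + b"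
    unfolding comp_iff_walk by blast
  show ?thesis
    using ray_system_of_translations[OF Tt inj_lattice_coordinates[OF ab] pa pb] by blast
qed

lemma planar_lattice_degree_bounded:
  assumes pl: "planar_lattice V E Pc"
  shows "\<exists>\<Delta>. degree_bounded V E \<Delta>"
proof -
  obtain a b S where TC: "\<And>m n :: int. translation_closed V E (of_int m * a + of_int n * b)"
    and S: "finite S" "S \<subseteq> V" "\<forall>v\<in>V. \<exists>u\<in>S. \<exists>m n :: int. v = u + of_int m * a + of_int n * b"
    by (rule planar_lattice_translations[OF pl]) (rule that)
  have "\<exists>u\<in>S. \<exists>t. v = u + t \<and> translation_closed V E (- t)" if v: "v \<in> V" for v
  proof -
    obtain u m n where "u \<in> S" "v = u + (of_int m * a + of_int n * b)"
      using S(3) v by (auto simp: add.assoc)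
    moreover have "translation_closed V E (- (of_int m * a + of_int n * b))"
      using TC[of "- m" "- n"] by (simp add: algebra_simps)
    ultimately show ?thesis by blast
  qed
  moreover have "locally_finite V E" using pl unfolding planar_lattice_def by (elim conjE)
  ultimately show ?thesis using degree_bounded_if_translates[OF _ S(1,2)] by blast
qed

lemma continuous_B_planar_lattice:
  assumes pl: "planar_lattice V E Pc" and x0: "x0 \<in> V"
  shows "continuous_on_01 (B_bond V E Pc x0) \<and> continuous_on_01 (B_site V E Pc x0)"
proof -
  have G: "graph V E" using pl unfolding planar_lattice_def by (elim conjE)
  obtain \<Delta> where deg: "degree_bounded V E \<Delta>" using planar_lattice_degree_bounded[OF pl] by blast
  obtain L M where rays: "ray_system V E x0 L M" using planar_lattice_ray_system[OF pl x0] by blast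
  show ?thesis by (rule continuous_B_if_ray_system[OF G deg x0 rays])
qed

lemma continuous_B_Zd:
  assumes "2 \<le> d" "x0 \<in> Zd_V d"
  shows "continuous_on_01 (B_bond (Zd_V d) (Zd_E d) Pc x0) \<and> continuous_on_01 (B_site (Zd_V d) (Zd_E d) Pc x0)"
  by (rule continuous_B_if_ray_system[OF graph_Zd degree_bounded_Zd assms(2) ray_system_Zd[OF assms]])

lemma continuous_B_Td:
  assumes "2 \<le> d" "x0 \<in> Zd_V d"
  shows "continuous_on_01 (B_bond (Zd_V d) (Td_E d) Pc x0) \<and> continuous_on_01 (B_site (Zd_V d) (Td_E d) Pc x0)"
  by (rule continuous_B_if_ray_system[OF graph_Td degree_bounded_Td assms(2)
        ray_system_mono[OF ray_system_Zd[OF assms] Zd_E_subset_Td_E]])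

theorem corollary10p3:
  shows "(\<forall>V E Pc (x0::complex). planar_lattice V E Pc \<and> x0 \<in> V \<longrightarrow>
            continuous_on_01 (B_bond V E Pc x0) \<and> continuous_on_01 (B_site V E Pc x0)) \<and>
         (\<forall>d\<ge>2. \<forall>x0\<in>Zd_V d.
            continuous_on_01 (B_bond (Zd_V d) (Zd_E d) (Zd_P d) x0) \<and>
            continuous_on_01 (B_site (Zd_V d) (Zd_E d) (Zd_P d) x0)) \<and>
         (\<forall>d\<ge>2. \<forall>x0\<in>Zd_V d.
            continuous_on_01 (B_bond (Zd_V d) (Td_E d) (Td_P d) x0) \<and>
            continuous_on_01 (B_site (Zd_V d) (Td_E d) (Td_P d) x0))"
  by (simp add: continuous_B_planar_lattice continuous_B_Zd continuous_B_Td)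

end
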